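(* Let $T=\{(x,y)\in\mathbb{R}^2:x+y>0\}$ and let $M\colon T\to\mathbf{Vec}$ be pointwise finite-dimensional, middle exact and indecomposable. If there exist $x\le x'$, $y\le y'$ with $a=(x,y)$, $b=(x,y')$, $c=(x',y)$, $d=(x',y')$ all in $T$ such that $\ker M(a\le b)\cap\ker M(a\le c)\neq0$, then $M\cong k_{J\cap T}$ for some block $J\subseteq\mathbb{R}^2$ of type db.
   Context: $T$ has the product order from $\mathbb{R}^2$. Middle exact on $T$: for all such $a,b,c,d\in T$ the sequence $M_a\xrightarrow{(M(a\le b),M(a\le c))}M_b\oplus M_c\xrightarrow{M(b\le d)-M(c\le d)}M_d$ is exact at the middle. A block of type db in $\mathbb{R}^2$ is $J_1\times J_2$ with $J_1,J_2\subseteq\mathbb{R}$ non-empty downward-closed. $k_B$ is $k$ on $B$, $0$ elsewhere, identity maps within $B$ and zero otherwise. *)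

theory Defs
  imports Complex_Main
begin

definition pleq :: "real \<times> real \<Rightarrow> real \<times> real \<Rightarrow> bool" where
  "pleq p q \<longleftrightarrow> fst p \<le> fst q \<and> snd p \<le> snd q"

definition Tset :: "(real \<times> real) set" where
  "Tset = {p. fst p + snd p > 0}"

text \<open>A persistence module over an index set I is represented by a family of
  subspaces V t of an ambient vector space (over field 'k with scalar
  multiplication scale) together with maps F s t, linear on V s.\<close>

definition lin_on :: "('k \<Rightarrow> 'v \<Rightarrow> 'v) \<Rightarrow> ('k \<Rightarrow> 'w \<Rightarrow> 'w) \<Rightarrow> 'v set
    \<Rightarrow> ('v::ab_group_add \<Rightarrow> 'w::ab_group_add) \<Rightarrow> bool" where
  "lin_on s1 s2 A f \<longleftrightarrow>
     (\<forall>x\<in>A. \<forall>y\<in>A. f (x + y) = f x + f y) \<and> (\<forall>c. \<forall>x\<in>A. f (s1 c x) = s2 c (f x))"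

definition pmod :: "('k::field \<Rightarrow> 'v::ab_group_add \<Rightarrow> 'v) \<Rightarrow> (real \<times> real) set
    \<Rightarrow> (real \<times> real \<Rightarrow> 'v set) \<Rightarrow> (real \<times> real \<Rightarrow> real \<times> real \<Rightarrow> 'v \<Rightarrow> 'v) \<Rightarrow> bool" where
  "pmod scale I V F \<longleftrightarrow> vector_space scale \<and>
     (\<forall>t\<in>I. module.subspace scale (V t)) \<and>
     (\<forall>s\<in>I. \<forall>t\<in>I. pleq s t \<longrightarrow> lin_on scale scale (V s) (F s t) \<and> F s t ` V s \<subseteq> V t) \<and>
     (\<forall>t\<in>I. \<forall>x\<in>V t. F t t x = x) \<and>
     (\<forall>s\<in>I. \<forall>t\<in>I. \<forall>u\<in>I. pleq s t \<longrightarrow> pleq t u \<longrightarrow>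
        (\<forall>x\<in>V s. F s u x = F t u (F s t x)))"

definition pfd :: "('k::field \<Rightarrow> 'v::ab_group_add \<Rightarrow> 'v) \<Rightarrow> (real \<times> real) set
    \<Rightarrow> (real \<times> real \<Rightarrow> 'v set) \<Rightarrow> bool" where
  "pfd scale I V \<longleftrightarrow> (\<forall>t\<in>I. \<exists>B. finite B \<and> B \<subseteq> V t \<and> module.span scale B = V t)"

text \<open>Middle exactness: for every rectangle a=(x,y), b=(x,y'), c=(x',y), d=(x',y')
  in I, the sequence V a -> V b (+) V c -> V d, (F a b, F a c), F b d - F c d,
  is exact at the middle.\<close>
definition middle_exact :: "(real \<times> real) set
    \<Rightarrow> (real \<times> real \<Rightarrow> 'v::ab_group_add set) \<Rightarrow> (real \<times> real \<Rightarrow> real \<times> real \<Rightarrow> 'v \<Rightarrow> 'v) \<Rightarrow> bool" where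
  "middle_exact I V F \<longleftrightarrow>
    (\<forall>x x' y y'. x \<le> x' \<longrightarrow> y \<le> y' \<longrightarrow>
      (x, y) \<in> I \<longrightarrow> (x, y') \<in> I \<longrightarrow> (x', y) \<in> I \<longrightarrow> (x', y') \<in> I \<longrightarrow>
      {(u, w). u \<in> V (x, y') \<and> w \<in> V (x', y) \<and>
               F (x, y') (x', y') u - F (x', y) (x', y') w = 0}
      = {(F (x, y) (x, y') z, F (x, y) (x', y) z) | z. z \<in> V (x, y)})"

definition submod :: "(real \<times> real) set \<Rightarrow> ('k::field \<Rightarrow> 'v::ab_group_add \<Rightarrow> 'v)
    \<Rightarrow> (real \<times> real \<Rightarrow> 'v set) \<Rightarrow> (real \<times> real \<Rightarrow> real \<times> real \<Rightarrow> 'v \<Rightarrow> 'v)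
    \<Rightarrow> (real \<times> real \<Rightarrow> 'v set) \<Rightarrow> bool" where
  "submod I scale V F W \<longleftrightarrow>
     (\<forall>t\<in>I. module.subspace scale (W t) \<and> W t \<subseteq> V t) \<and>
     (\<forall>s\<in>I. \<forall>t\<in>I. pleq s t \<longrightarrow> F s t ` W s \<subseteq> W t)"

definition indecomposable :: "('k::field \<Rightarrow> 'v::ab_group_add \<Rightarrow> 'v) \<Rightarrow> (real \<times> real) set
    \<Rightarrow> (real \<times> real \<Rightarrow> 'v set) \<Rightarrow> (real \<times> real \<Rightarrow> real \<times> real \<Rightarrow> 'v \<Rightarrow> 'v) \<Rightarrow> bool" where
  "indecomposable scale I V F \<longleftrightarrow>
     (\<exists>t\<in>I. V t \<noteq> {0}) \<and>
     (\<forall>W1 W2. submod I scale V F W1 \<longrightarrow> submod I scale V F W2 \<longrightarrow>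
        (\<forall>t\<in>I. W1 t \<inter> W2 t = {0} \<and> {u + w | u w. u \<in> W1 t \<and> w \<in> W2 t} = V t) \<longrightarrow>
        (\<forall>t\<in>I. W1 t = {0}) \<or> (\<forall>t\<in>I. W2 t = {0}))"

definition pmod_iso :: "(real \<times> real) set
    \<Rightarrow> ('k::field \<Rightarrow> 'v::ab_group_add \<Rightarrow> 'v) \<Rightarrow> (real \<times> real \<Rightarrow> 'v set) \<Rightarrow> (real \<times> real \<Rightarrow> real \<times> real \<Rightarrow> 'v \<Rightarrow> 'v)
    \<Rightarrow> ('k \<Rightarrow> 'w::ab_group_add \<Rightarrow> 'w) \<Rightarrow> (real \<times> real \<Rightarrow> 'w set) \<Rightarrow> (real \<times> real \<Rightarrow> real \<times> real \<Rightarrow> 'w \<Rightarrow> 'w)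
    \<Rightarrow> bool" where
  "pmod_iso I s1 V1 F1 s2 V2 F2 \<longleftrightarrow>
     (\<exists>\<phi>. (\<forall>t\<in>I. lin_on s1 s2 (V1 t) (\<phi> t) \<and> bij_betw (\<phi> t) (V1 t) (V2 t)) \<and>
          (\<forall>s\<in>I. \<forall>t\<in>I. pleq s t \<longrightarrow> (\<forall>x\<in>V1 s. \<phi> t (F1 s t x) = F2 s t (\<phi> s x))))"

definition kB_space :: "(real \<times> real) set \<Rightarrow> real \<times> real \<Rightarrow> 'k::field set" where
  "kB_space B t = (if t \<in> B then UNIV else {0})"

definition kB_map :: "(real \<times> real) set \<Rightarrow> real \<times> real \<Rightarrow> real \<times> real \<Rightarrow> 'k::field \<Rightarrow> 'k" where
  "kB_map B s t x = (if s \<in> B \<and> t \<in> B then x else 0)"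

definition down_closed :: "real set \<Rightarrow> bool" where
  "down_closed J \<longleftrightarrow> (\<forall>x\<in>J. \<forall>y. y \<le> x \<longrightarrow> y \<in> J)"

definition block_db :: "(real \<times> real) set \<Rightarrow> bool" where
  "block_db J \<longleftrightarrow> (\<exists>J1 J2. J1 \<noteq> {} \<and> J2 \<noteq> {} \<and> down_closed J1 \<and> down_closed J2 \<and> J = J1 \<times> J2)"

end

theory Submission imports Defs begin

text \<open>Fix \<open>v \<noteq> 0\<close> at \<open>a = (x0, y0)\<close> vanishing along both sides of the rectangle. Call a
  vector at \<open>t\<close> killed by \<open>J1\<close>, \<open>J2\<close> if it vanishes once pushed horizontally out of \<open>J1\<close> or
  vertically out of \<open>J2\<close>. Shrinking first \<open>J1\<close> and then \<open>J2\<close> to the intersection of all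
  down-closed sets that still kill a nonzero vector at \<open>a\<close> (finite dimensionality makes the
  corresponding chain of subspaces stabilise) yields a block \<open>Jx \<times> Jy\<close>, and by minimality and
  middle exactness a nonzero killed vector \<open>e\<close> at \<open>a\<close> survives on all of
  \<open>B = (Jx \<times> Jy) \<inter> T\<close>. Middle exactness also lifts compatible killed vectors from the upper
  neighbours of a grid square to its lower corner, so \<open>e\<close> extends to compatible families on ever
  finer grids in \<open>B\<close>, hence to a compatible family \<open>sec\<close> on \<open>B\<close> dying outside \<open>B\<close>. Dually,
  along a cofinal chain in \<open>B\<close> one builds compatible functionals taking the value 1 on \<open>sec\<close>.
  Then \<open>M\<close> is the direct sum of the span of \<open>sec\<close> and the kernel of the functionals;
  indecomposability kills the second summand, and the functionals give \<open>M \<cong> k\<^sub>B\<close>.\<close>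

lemma vector_space_field_mult: "vector_space ((*) :: 'k::field \<Rightarrow> 'k \<Rightarrow> 'k)"
  by unfold_locales (auto simp: algebra_simps)

lemma down_closed_lessThan: "down_closed {..<c}"
  unfolding down_closed_def by auto

lemma down_closed_total: "down_closed A \<Longrightarrow> down_closed B \<Longrightarrow> A \<subseteq> B \<or> B \<subseteq> A"
  unfolding down_closed_def by (meson linear subsetI)

lemma down_closed_Inter:
  assumes "\<And>J. J \<in> \<J> \<Longrightarrow> down_closed J"
  shows "down_closed (\<Inter>\<J>)"
  unfolding down_closed_def
proof (intro ballI allI impI InterI)
  fix x y J assume "x \<in> \<Inter>\<J>" "y \<le> x" "J \<in> \<J>"
  then show "y \<in> J" using assms[of J] unfolding down_closed_def by blast
qed

lemma down_closed_cofinal_seq: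
  fixes J :: "real set"
  assumes dc: "down_closed J" and x0: "x0 \<in> J" and bd: "J \<subseteq> {..<b}"
  shows "\<exists>\<alpha>::nat \<Rightarrow> real. (\<forall>n. \<alpha> n \<in> J) \<and> \<alpha> 0 = x0 \<and> mono \<alpha> \<and> (\<forall>p\<in>J. \<exists>n. p \<le> \<alpha> n)"
proof -
  have bdd: "bdd_above J" using bd unfolding bdd_above_def by (auto intro: less_imp_le)
  define \<sigma> where "\<sigma> = Sup J"
  have up: "p \<le> \<sigma>" if "p \<in> J" for p unfolding \<sigma>_def using cSup_upper bdd that by blast
  show ?thesis
  proof (cases "\<sigma> \<in> J")
    case True
    define \<alpha> where "\<alpha> n = (if n = 0 then x0 else \<sigma>)" for n :: nat
    have "mono \<alpha>" unfolding mono_def \<alpha>_def using up[OF x0] by auto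
    moreover have "\<forall>p\<in>J. \<exists>n. p \<le> \<alpha> n" using up unfolding \<alpha>_def by (intro ballI exI[of _ 1]) simp
    ultimately show ?thesis using True x0 by (intro exI[of _ \<alpha>]) (auto simp: \<alpha>_def)
  next
    case False
    have xs: "x0 < \<sigma>" using up[OF x0] x0 False by (cases "x0 = \<sigma>") auto
    define \<alpha> where "\<alpha> n = \<sigma> - (\<sigma> - x0) / (real n + 1)" for n :: nat
    have "\<alpha> n \<in> J" for n
    proof -
      have "\<alpha> n < \<sigma>" unfolding \<alpha>_def using xs by simp
      then obtain p where "p \<in> J" "\<alpha> n < p"
        using less_cSup_iff[OF _ bdd] x0 unfolding \<sigma>_def by blast
      then show ?thesis using dc unfolding down_closed_def by (meson less_imp_le)
    qed
    moreover have "mono \<alpha>"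
    proof (rule monoI)
      fix m n :: nat assume "m \<le> n"
      then have "(\<sigma> - x0) / (real n + 1) \<le> (\<sigma> - x0) / (real m + 1)"
        using xs by (intro divide_left_mono) auto
      then show "\<alpha> m \<le> \<alpha> n" unfolding \<alpha>_def by simp
    qed
    moreover have "\<exists>n. p \<le> \<alpha> n" if p: "p \<in> J" for p
    proof -
      have ps: "p < \<sigma>" using up[OF p] p False by (cases "p = \<sigma>") auto
      obtain n :: nat where "(\<sigma> - x0) / (\<sigma> - p) < real n" using reals_Archimedean2 by blast
      then have "(\<sigma> - x0) / (\<sigma> - p) < real n + 1" by simp
      then have "\<sigma> - x0 < (real n + 1) * (\<sigma> - p)" using ps
        by (simp add: pos_divide_less_eq mult.commute)
      then have "(\<sigma> - x0) / (real n + 1) < \<sigma> - p" by (simp add: pos_divide_less_eq mult.commute)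
      then show ?thesis unfolding \<alpha>_def by (intro exI[of _ n]) simp
    qed
    ultimately show ?thesis by (intro exI[of _ \<alpha>]) (auto simp: \<alpha>_def)
  qed
qed

context vector_space
begin

lemma subspace_le_dim_imp_subset:
  assumes S: "subspace S" and sub: "S \<subseteq> S'" and W: "finite W" "S' \<subseteq> span W"
    and dim: "dim S' \<le> dim S"
  shows "S' \<subseteq> S"
proof
  fix t assume t: "t \<in> S'"
  obtain B where B: "B \<subseteq> S" "independent B" "S \<subseteq> span B"
    using maximal_independent_subset[of S] by blast
  obtain C where C: "C \<subseteq> S'" "independent C" "S' \<subseteq> span C"
    using maximal_independent_subset[of S'] by blast
  have fC: "finite C" using independent_span_bound[OF W(1) C(2)] C(1) W(2) by blast
  have spB: "span B = S" using B S span_minimal[of B S] by blast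
  show "t \<in> S"
  proof (rule ccontr)
    assume "t \<notin> S"
    then have tB: "t \<notin> span B" using spB by simp
    then have ind: "independent (insert t B)" using independent_insertI B by blast
    have sp: "insert t B \<subseteq> span C" using t B sub C by blast
    from independent_span_bound[OF fC ind sp]
    have "finite (insert t B)" "card (insert t B) \<le> card C" by auto
    moreover have "t \<notin> B" using tB span_base by blast
    ultimately show False
      using dim basis_card_eq_dim[OF B(1,3,2)] basis_card_eq_dim[OF C(1,3,2)] by simp
  qed
qed

lemma chain_of_subspaces_has_least:
  assumes ne: "\<SS> \<noteq> {}" and sub: "\<And>S. S \<in> \<SS> \<Longrightarrow> subspace S \<and> S \<subseteq> span W"
    and W: "finite W" and chain: "\<And>S S'. S \<in> \<SS> \<Longrightarrow> S' \<in> \<SS> \<Longrightarrow> S \<subseteq> S' \<or> S' \<subseteq> S"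
  shows "\<exists>S0\<in>\<SS>. \<forall>S\<in>\<SS>. S0 \<subseteq> S"
proof -
  obtain S0 where S0: "S0 \<in> \<SS>" and least: "\<And>S. S \<in> \<SS> \<Longrightarrow> dim S0 \<le> dim S"
    using ex_has_least_nat[of "\<lambda>S. S \<in> \<SS>" _ dim] ne by blast
  have "S0 \<subseteq> S" if S: "S \<in> \<SS>" for S
    using chain[OF S S0] subspace_le_dim_imp_subset[OF _ _ W, of S S0] sub[OF S] sub[OF S0] least[OF S]
    by blast
  then show ?thesis using S0 by blast
qed

lemma Inter_down_closed_nonzero:
  fixes K :: "real set \<Rightarrow> 'b set"
  assumes mono: "\<And>J J'. J \<subseteq> J' \<Longrightarrow> K J \<subseteq> K J'" and sub: "\<And>J. subspace (K J)"
    and W: "finite W" "\<And>J. K J \<subseteq> span W"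
    and inter: "\<And>\<J> z. \<J> \<noteq> {} \<Longrightarrow> \<forall>J\<in>\<J>. z \<in> K J \<Longrightarrow> z \<in> K (\<Inter>\<J>)"
    and J0: "down_closed J0" "x0 \<in> J0" "K J0 \<noteq> {0}"
  shows "K (\<Inter>{J. down_closed J \<and> x0 \<in> J \<and> K J \<noteq> {0}}) \<noteq> {0}"
proof -
  let ?\<J> = "{J. down_closed J \<and> x0 \<in> J \<and> K J \<noteq> {0}}"
  have J0_in: "J0 \<in> ?\<J>" using J0 by simp
  have chain: "S \<subseteq> S' \<or> S' \<subseteq> S" if S: "S \<in> K ` ?\<J>" "S' \<in> K ` ?\<J>" for S S'
  proof -
    obtain J where J: "S = K J" "J \<in> ?\<J>" using S(1) by (rule imageE)
    obtain J' where J': "S' = K J'" "J' \<in> ?\<J>" using S(2) by (rule imageE)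
    show ?thesis using down_closed_total[of J J'] mono[of J J'] mono[of J' J] J J' by auto
  qed
  have "\<exists>S0\<in>K ` ?\<J>. \<forall>S\<in>K ` ?\<J>. S0 \<subseteq> S"
  proof (rule chain_of_subspaces_has_least[OF _ _ W(1) chain])
    show "K ` ?\<J> \<noteq> {}" using J0_in by blast
    show "subspace S \<and> S \<subseteq> span W" if "S \<in> K ` ?\<J>" for S
      using that sub W(2) by blast
  qed
  then obtain Jm where Jm: "Jm \<in> ?\<J>" "\<And>J. J \<in> ?\<J> \<Longrightarrow> K Jm \<subseteq> K J" by auto
  have "K Jm \<subseteq> K (\<Inter>?\<J>)"
  proof
    fix z assume "z \<in> K Jm"
    then show "z \<in> K (\<Inter>?\<J>)" using inter[of ?\<J> z] Jm(2) J0_in by auto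
  qed
  moreover have "K Jm \<noteq> {0}" "0 \<in> K Jm" using Jm(1) subspace_0[OF sub] by auto
  ultimately show ?thesis using subspace_0[OF sub] by auto
qed

lemma exists_functional_one_off_subspace:
  assumes W: "subspace W" and e: "e \<notin> W"
  shows "\<exists>g. Vector_Spaces.linear scale (*) g \<and> g e = 1 \<and> (\<forall>z\<in>W. g z = 0)"
proof -
  obtain B where B: "B \<subseteq> W" "independent B" "W \<subseteq> span B"
    using maximal_independent_subset[of W] by blast
  have spB: "span B = W" using B W span_minimal[of B W] by blast
  have ind: "independent (insert e B)" using independent_insertI[of e B] e spB B(2) by simp
  interpret vector_space_pair scale "(*) :: 'a \<Rightarrow> 'a \<Rightarrow> 'a"
    by (intro vector_space_pair.intro vector_space_axioms vector_space_field_mult)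
  obtain g where g: "Vector_Spaces.linear scale (*) g" "\<forall>x\<in>insert e B. g x = (if x = e then 1 else 0)"
    using linear_independent_extend[OF ind, of "\<lambda>x. if x = e then 1 else 0"] by blast
  have "e \<notin> B" using e B(1) by blast
  then have "g z = 0" if "z \<in> W" for z
    using module_hom.eq_0_on_span[OF g(1)[unfolded linear_iff_module_hom], of B z] g(2) spB that
    by fastforce
  then show ?thesis using g by auto
qed

lemma exists_linear_extension:
  assumes S: "subspace S" and h: "lin_on scale (*) S h"
  shows "\<exists>g. Vector_Spaces.linear scale (*) g \<and> (\<forall>x\<in>S. g x = h x)"
proof -
  obtain B where B: "B \<subseteq> S" "independent B" "S \<subseteq> span B"
    using maximal_independent_subset[of S] by blast
  interpret vector_space_pair scale "(*) :: 'a \<Rightarrow> 'a \<Rightarrow> 'a"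
    by (intro vector_space_pair.intro vector_space_axioms vector_space_field_mult)
  obtain g where g: "Vector_Spaces.linear scale (*) g" "\<forall>x\<in>B. g x = h x"
    using linear_independent_extend[OF B(2)] by blast
  have h0: "h 0 = 0" using h subspace_0[OF S] unfolding lin_on_def
    by (metis scale_zero_left mult_zero_left)
  interpret g: Vector_Spaces.linear scale "(*)" g by (fact g(1))
  have "subspace {x \<in> S. g x = h x}"
    using S h h0 unfolding subspace_def lin_on_def by (simp add: g.add g.scale)
  then have "span B \<subseteq> {x \<in> S. g x = h x}" using g(2) B(1) by (intro span_minimal) auto
  then show ?thesis using g(1) B(3) by blast
qed

lemma exists_functional_through_map:
  assumes V1: "subspace V1" and Z: "subspace Z" and Fm: "lin_on scale scale V1 Fm"
    and g: "Vector_Spaces.linear scale (*) g" and gz: "\<And>x. x \<in> V1 \<Longrightarrow> Fm x \<in> Z \<Longrightarrow> g x = 0"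
  shows "\<exists>g'. Vector_Spaces.linear scale (*) g' \<and> (\<forall>x\<in>V1. g' (Fm x) = g x) \<and> (\<forall>z\<in>Z. g' z = 0)"
proof -
  interpret g: Vector_Spaces.linear scale "(*)" g by (fact g)
  have Fm_add: "Fm (x + y) = Fm x + Fm y" and Fm_scale: "Fm (scale c x) = scale c (Fm x)"
    if "x \<in> V1" "y \<in> V1" for x y c
    using Fm that unfolding lin_on_def by auto
  have Fm_diff: "Fm (x - y) = Fm x - Fm y" if "x \<in> V1" "y \<in> V1" for x y
    using Fm_add[of "x - y" y] subspace_diff[OF V1 that] that by (simp add: algebra_simps)
  have Fm0: "Fm 0 = 0" using Fm_scale[of 0 0 0] subspace_0[OF V1] by simp
  define S where "S = {Fm x + z | x z. x \<in> V1 \<and> z \<in> Z}"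
  define h where "h y = g (SOME x. x \<in> V1 \<and> (\<exists>z\<in>Z. y = Fm x + z))" for y
  have h: "h (Fm x + z) = g x" if "x \<in> V1" "z \<in> Z" for x z
  proof -
    define x' where "x' = (SOME x'. x' \<in> V1 \<and> (\<exists>z'\<in>Z. Fm x + z = Fm x' + z'))"
    have "x' \<in> V1 \<and> (\<exists>z'\<in>Z. Fm x + z = Fm x' + z')"
      unfolding x'_def by (rule someI_ex) (use that in blast)
    then obtain z' where x': "x' \<in> V1" "z' \<in> Z" "Fm x + z = Fm x' + z'" by blast
    have "Fm x - Fm x' = z' - z" using x'(3)
      by (metis add.commute add_diff_cancel_left' diff_diff_eq2)
    then have "Fm (x - x') = z' - z" using Fm_diff[OF that(1) x'(1)] by simp
    then have "g (x - x') = 0"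
      using gz subspace_diff[OF V1 that(1) x'(1)] subspace_diff[OF Z x'(2) that(2)] by simp
    then show ?thesis unfolding h_def x'_def[symmetric] by (simp add: g.diff)
  qed
  have sum: "(Fm x1 + z1) + (Fm x2 + z2) = Fm (x1 + x2) + (z1 + z2)"
    and mult: "scale c (Fm x1 + z1) = Fm (scale c x1) + scale c z1"
    if "x1 \<in> V1" "x2 \<in> V1" for x1 x2 z1 z2 c
    using that by (simp_all add: Fm_add Fm_scale algebra_simps)
  have S_sub: "subspace S"
  proof (rule subspaceI)
    show "0 \<in> S" unfolding S_def using subspace_0[OF V1] subspace_0[OF Z] Fm0 by force
  qed (fastforce simp: S_def sum mult intro: subspace_add[OF V1] subspace_add[OF Z]
      subspace_scale[OF V1] subspace_scale[OF Z])+
  have "lin_on scale (*) S h"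
    unfolding lin_on_def S_def
    by (auto simp: sum mult h g.add g.scale subspace_add[OF V1] subspace_add[OF Z]
        subspace_scale[OF V1] subspace_scale[OF Z])
  then obtain g' where g': "Vector_Spaces.linear scale (*) g'" "\<forall>y\<in>S. g' y = h y"
    using exists_linear_extension[OF S_sub] by blast
  have "g' (Fm x) = g x" if "x \<in> V1" for x
    using g'(2) h[OF that subspace_0[OF Z]] that subspace_0[OF Z] unfolding S_def by force
  moreover have "g' z = 0" if "z \<in> Z" for z
    using g'(2) h[OF subspace_0[OF V1] that] that subspace_0[OF V1] Fm0 unfolding S_def by force
  ultimately show ?thesis using g'(1) by blast
qed

end

lemma pleq_refl [simp]: "pleq s s"
  by (simp add: pleq_def)

lemma pleq_trans: "pleq s t \<Longrightarrow> pleq t u \<Longrightarrow> pleq s u"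
  by (auto simp: pleq_def)

lemma pleq_PairI: "x \<le> x' \<Longrightarrow> y \<le> y' \<Longrightarrow> pleq (x, y) (x', y')"
  by (simp add: pleq_def)

lemma pleq_sum_less: "pleq q t \<Longrightarrow> t \<noteq> q \<Longrightarrow> fst q + snd q < fst t + snd t"
  by (cases q, cases t) (auto simp: pleq_def)

lemma floor_divide_bounds:
  fixes c h :: real
  assumes h: "0 < h"
  shows "h * of_int \<lfloor>c / h\<rfloor> \<le> c" "c - h < h * of_int \<lfloor>c / h\<rfloor>"
proof -
  have "h * of_int \<lfloor>c / h\<rfloor> \<le> h * (c / h)" using h by (intro mult_left_mono) auto
  then show "h * of_int \<lfloor>c / h\<rfloor> \<le> c" using h by simp
  have "c / h - 1 < of_int \<lfloor>c / h\<rfloor>" by linarith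
  then have "(c - h) / h < of_int \<lfloor>c / h\<rfloor>" using h by (simp add: diff_divide_distrib)
  then show "c - h < h * of_int \<lfloor>c / h\<rfloor>" using h by (simp add: pos_divide_less_eq mult.commute)
qed

lemma Tset_up: "t \<in> Tset \<Longrightarrow> pleq t s \<Longrightarrow> s \<in> Tset"
  by (auto simp: Tset_def pleq_def)

definition join :: "real \<times> real \<Rightarrow> real \<times> real \<Rightarrow> real \<times> real" where
  "join s t = (max (fst s) (fst t), max (snd s) (snd t))"

lemma join_ge: "pleq s (join s t)" "pleq t (join s t)"
  by (auto simp: join_def pleq_def)

lemma join_le: "pleq s u \<Longrightarrow> pleq t u \<Longrightarrow> pleq (join s t) u"
  by (auto simp: join_def pleq_def)

section \<open>Middle exact modules over the half-plane\<close>

locale pfd_middle_exact =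
  fixes scale :: "'k::field \<Rightarrow> 'v::ab_group_add \<Rightarrow> 'v"
    and V :: "real \<times> real \<Rightarrow> 'v set"
    and F :: "real \<times> real \<Rightarrow> real \<times> real \<Rightarrow> 'v \<Rightarrow> 'v"
  assumes pm: "pmod scale Tset V F" and pf: "pfd scale Tset V" and me: "middle_exact Tset V F"
begin

sublocale vs: vector_space scale using pm by (simp add: pmod_def)

lemma V_subspace: "t \<in> Tset \<Longrightarrow> vs.subspace (V t)"
  using pm by (simp add: pmod_def)

lemma V_finite_span: "t \<in> Tset \<Longrightarrow> \<exists>B. finite B \<and> B \<subseteq> V t \<and> vs.span B = V t"
  using pf by (simp add: pfd_def)

lemma F_lin_on: "s \<in> Tset \<Longrightarrow> pleq s t \<Longrightarrow> lin_on scale scale (V s) (F s t)"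
  using pm Tset_up unfolding pmod_def by blast

lemma F_in_V: "s \<in> Tset \<Longrightarrow> pleq s t \<Longrightarrow> x \<in> V s \<Longrightarrow> F s t x \<in> V t"
  using pm Tset_up unfolding pmod_def by blast

lemma F_id: "t \<in> Tset \<Longrightarrow> x \<in> V t \<Longrightarrow> F t t x = x"
  using pm unfolding pmod_def by blast

lemma F_comp:
  assumes "s \<in> Tset" "pleq s t" "pleq t u" "x \<in> V s"
  shows "F s u x = F t u (F s t x)"
proof -
  have "t \<in> Tset" "u \<in> Tset" using Tset_up pleq_trans assms by blast+
  then show ?thesis using pm assms unfolding pmod_def by blast
qed

lemma F_add:
  "s \<in> Tset \<Longrightarrow> pleq s t \<Longrightarrow> x \<in> V s \<Longrightarrow> y \<in> V s \<Longrightarrow> F s t (x + y) = F s t x + F s t y"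
  using F_lin_on[of s t] unfolding lin_on_def by simp

lemma F_scale: "s \<in> Tset \<Longrightarrow> pleq s t \<Longrightarrow> x \<in> V s \<Longrightarrow> F s t (scale c x) = scale c (F s t x)"
  using F_lin_on[of s t] unfolding lin_on_def by simp

lemma F_zero: "s \<in> Tset \<Longrightarrow> pleq s t \<Longrightarrow> F s t 0 = 0"
  using F_scale[of s t 0 0] vs.subspace_0[OF V_subspace[of s]] by simp

lemma F_zero_after:
  assumes "s \<in> Tset" "pleq s r" "pleq r t" "x \<in> V s" "F s r x = 0"
  shows "F s t x = 0"
  using F_comp[OF assms(1-4)] F_zero[OF Tset_up[OF assms(1,2)] assms(3)] assms(5) by simp

lemma middle_exact_lift:
  assumes "x \<le> x'" "y \<le> y'" "(x, y) \<in> Tset" "u \<in> V (x, y')" "w \<in> V (x', y)"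
    and "F (x, y') (x', y') u = F (x', y) (x', y') w"
  shows "\<exists>z\<in>V (x, y). F (x, y) (x, y') z = u \<and> F (x, y) (x', y) z = w"
proof -
  let ?ker = "{(u, w). u \<in> V (x, y') \<and> w \<in> V (x', y) \<and> F (x, y') (x', y') u - F (x', y) (x', y') w = 0}"
  have "(x, y') \<in> Tset" "(x', y) \<in> Tset" "(x', y') \<in> Tset"
    using assms by (auto simp: Tset_def)
  then have "?ker = {(F (x, y) (x, y') z, F (x, y) (x', y) z) | z. z \<in> V (x, y)}"
    using me assms(1-3) unfolding middle_exact_def by presburger
  moreover have "(u, w) \<in> ?ker" using assms by simp
  ultimately have "(u, w) \<in> {(F (x, y) (x, y') z, F (x, y) (x', y) z) | z. z \<in> V (x, y)}" by simp
  then show ?thesis by blast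
qed

definition killed :: "real set \<Rightarrow> real set \<Rightarrow> real \<times> real \<Rightarrow> 'v set" where
  "killed J1 J2 t = {z \<in> V t. (\<forall>p. fst t \<le> p \<longrightarrow> p \<notin> J1 \<longrightarrow> F t (p, snd t) z = 0) \<and>
                             (\<forall>q. snd t \<le> q \<longrightarrow> q \<notin> J2 \<longrightarrow> F t (fst t, q) z = 0)}"

lemma killed_mono: "J1 \<subseteq> J1' \<Longrightarrow> J2 \<subseteq> J2' \<Longrightarrow> killed J1 J2 t \<subseteq> killed J1' J2' t"
  unfolding killed_def by blast

lemma subspace_killed:
  assumes t: "t \<in> Tset"
  shows "vs.subspace (killed J1 J2 t)"
proof (rule vs.subspaceI)
  have p1: "\<And>p. fst t \<le> p \<Longrightarrow> pleq t (p, snd t)" and p2: "\<And>q. snd t \<le> q \<Longrightarrow> pleq t (fst t, q)"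
    by (auto simp: pleq_def)
  show "0 \<in> killed J1 J2 t"
    unfolding killed_def using vs.subspace_0[OF V_subspace[OF t]] F_zero[OF t p1] F_zero[OF t p2]
      by auto
  show "x + y \<in> killed J1 J2 t" if "x \<in> killed J1 J2 t" "y \<in> killed J1 J2 t" for x y
    using that vs.subspace_add[OF V_subspace[OF t]] F_add[OF t p1] F_add[OF t p2]
      unfolding killed_def
    by simp
  show "scale c x \<in> killed J1 J2 t" if "x \<in> killed J1 J2 t" for c x
    using that vs.subspace_scale[OF V_subspace[OF t]] F_scale[OF t p1] F_scale[OF t p2]
      unfolding killed_def
    by simp
qed

lemma killed_subset_V: "killed J1 J2 t \<subseteq> V t"
  unfolding killed_def by blast

lemma killed_Inter_fst: "\<J> \<noteq> {} \<Longrightarrow> \<forall>J\<in>\<J>. z \<in> killed J J2 t \<Longrightarrow> z \<in> killed (\<Inter>\<J>) J2 t"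
  unfolding killed_def by blast

lemma killed_Inter_snd: "\<J> \<noteq> {} \<Longrightarrow> \<forall>J\<in>\<J>. z \<in> killed J1 J t \<Longrightarrow> z \<in> killed J1 (\<Inter>\<J>) t"
  unfolding killed_def by blast

lemma subspace_kernel_F:
  assumes q: "q \<in> Tset" and r: "pleq q r"
  shows "vs.subspace {z \<in> V q. F q r z = 0}"
proof (rule vs.subspaceI)
  show "0 \<in> {z \<in> V q. F q r z = 0}" using vs.subspace_0[OF V_subspace[OF q]] F_zero[OF q r] by simp
  show "x + y \<in> {z \<in> V q. F q r z = 0}" if "x \<in> {z \<in> V q. F q r z = 0}" "y \<in> {z \<in> V q. F q r z = 0}" for x y
    using that vs.subspace_add[OF V_subspace[OF q]] F_add[OF q r] by simp
  show "scale c x \<in> {z \<in> V q. F q r z = 0}" if "x \<in> {z \<in> V q. F q r z = 0}" for c x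
    using that vs.subspace_scale[OF V_subspace[OF q]] F_scale[OF q r] by simp
qed

lemma kernel_along_chain_stabilizes:
  assumes q: "q \<in> Tset" and P: "P \<noteq> {}" "\<And>r. r \<in> P \<Longrightarrow> pleq q r"
    and chain: "\<And>r r'. r \<in> P \<Longrightarrow> r' \<in> P \<Longrightarrow> pleq r r' \<or> pleq r' r"
  shows "\<exists>r0\<in>P. \<forall>z\<in>V q. F q r0 z = 0 \<longrightarrow> (\<forall>r\<in>P. F q r z = 0)"
proof -
  let ?k = "\<lambda>r. {z \<in> V q. F q r z = 0}"
  obtain W where W: "finite W" "vs.span W = V q" using V_finite_span[OF q] by blast
  have mono: "?k r \<subseteq> ?k r'" if "r \<in> P" "pleq r r'" for r r'
    using F_zero_after[OF q P(2)[OF that(1)] that(2)] by blast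
  have "\<exists>S0\<in>?k ` P. \<forall>S\<in>?k ` P. S0 \<subseteq> S"
  proof (rule vs.chain_of_subspaces_has_least[OF _ _ W(1)])
    show "?k ` P \<noteq> {}" using P(1) by blast
    show "vs.subspace S \<and> S \<subseteq> vs.span W" if "S \<in> ?k ` P" for S
      using that subspace_kernel_F[OF q P(2)] W(2) by auto
    show "S \<subseteq> S' \<or> S' \<subseteq> S" if S: "S \<in> ?k ` P" "S' \<in> ?k ` P" for S S'
    proof -
      obtain r where r: "S = ?k r" "r \<in> P" using S(1) by (rule imageE)
      obtain r' where r': "S' = ?k r'" "r' \<in> P" using S(2) by (rule imageE)
      from chain[OF r(2) r'(2)] show ?thesis using mono[OF r(2)] mono[OF r'(2)] r(1) r'(1) by blast
    qed
  qed
  then obtain r0 where "r0 \<in> P" "\<And>r. r \<in> P \<Longrightarrow> ?k r0 \<subseteq> ?k r" by auto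
  then show ?thesis by blast
qed

end

section \<open>The block of a killed vector\<close>

locale killed_vector = pfd_middle_exact scale V F
  for scale :: "'k::field \<Rightarrow> 'v::ab_group_add \<Rightarrow> 'v" and V F +
  fixes x0 y0 x1 y1 :: real and v :: 'v
  assumes le: "x0 \<le> x1" "y0 \<le> y1" and aT: "(x0, y0) \<in> Tset"
    and vV: "v \<in> V (x0, y0)" and v0: "v \<noteq> 0"
    and vb: "F (x0, y0) (x0, y1) v = 0" and vc: "F (x0, y0) (x1, y0) v = 0"
begin

abbreviation "a \<equiv> (x0, y0)"

definition "Jx = \<Inter>{J. down_closed J \<and> x0 \<in> J \<and> killed J {..<y1} a \<noteq> {0}}"
definition "Jy = \<Inter>{J. down_closed J \<and> y0 \<in> J \<and> killed Jx J a \<noteq> {0}}"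

lemma v_killed: "v \<in> killed {..<x1} {..<y1} a"
proof -
  have "F a (p, y0) v = 0" if "x1 \<le> p" for p
    using F_zero_after[OF aT pleq_PairI[of x0 x1 y0 y0] pleq_PairI[of x1 p y0 y0] vV vc] le that
      by simp
  moreover have "F a (x0, q) v = 0" if "y1 \<le> q" for q
    using F_zero_after[OF aT pleq_PairI[of x0 x0 y0 y1] pleq_PairI[of x0 x0 y1 q] vV vb] le that
      by simp
  ultimately show ?thesis unfolding killed_def using vV by (auto simp: not_less)
qed

lemma Jx_props: "down_closed Jx" "x0 \<in> Jx" "Jx \<subseteq> {..<x1}" "killed Jx {..<y1} a \<noteq> {0}"
    "\<And>J. down_closed J \<Longrightarrow> x0 \<in> J \<Longrightarrow> killed J {..<y1} a \<noteq> {0} \<Longrightarrow> Jx \<subseteq> J"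
proof -
  have "x0 \<noteq> x1" using vc F_id[OF aT vV] v0 by auto
  then have J0: "x0 \<in> {..<x1}" using le by simp
  have K0: "killed {..<x1} {..<y1} a \<noteq> {0}" using v_killed v0 by blast
  obtain W where W: "finite W" "vs.span W = V a" using V_finite_span[OF aT] by blast
  have mono: "J \<subseteq> J' \<Longrightarrow> killed J {..<y1} a \<subseteq> killed J' {..<y1} a" for J J'
    by (rule killed_mono) simp_all
  have span: "killed J {..<y1} a \<subseteq> vs.span W" for J
    using killed_subset_V W(2) by simp
  show "killed Jx {..<y1} a \<noteq> {0}"
    unfolding Jx_def
    using vs.Inter_down_closed_nonzero[where K = "\<lambda>J. killed J {..<y1} a",
        OF mono subspace_killed[OF aT] W(1) span killed_Inter_fst down_closed_lessThan J0 K0] .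
  show least: "\<And>J. down_closed J \<Longrightarrow> x0 \<in> J \<Longrightarrow> killed J {..<y1} a \<noteq> {0} \<Longrightarrow> Jx \<subseteq> J"
    unfolding Jx_def by (rule Inter_lower) simp
  show "Jx \<subseteq> {..<x1}" using least[OF down_closed_lessThan J0 K0] .
  show "down_closed Jx" "x0 \<in> Jx" unfolding Jx_def by (auto intro: down_closed_Inter)
qed

lemma Jy_props: "down_closed Jy" "y0 \<in> Jy" "Jy \<subseteq> {..<y1}" "killed Jx Jy a \<noteq> {0}"
    "\<And>J. down_closed J \<Longrightarrow> y0 \<in> J \<Longrightarrow> killed Jx J a \<noteq> {0} \<Longrightarrow> Jy \<subseteq> J"
proof -
  have "y0 \<noteq> y1" using vb F_id[OF aT vV] v0 by auto
  then have J0: "y0 \<in> {..<y1}" using le by simp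
  obtain W where W: "finite W" "vs.span W = V a" using V_finite_span[OF aT] by blast
  have mono: "J \<subseteq> J' \<Longrightarrow> killed Jx J a \<subseteq> killed Jx J' a" for J J'
    by (rule killed_mono) simp_all
  have span: "killed Jx J a \<subseteq> vs.span W" for J
    using killed_subset_V W(2) by simp
  show "killed Jx Jy a \<noteq> {0}"
    unfolding Jy_def
    using vs.Inter_down_closed_nonzero[where K = "\<lambda>J. killed Jx J a",
        OF mono subspace_killed[OF aT] W(1) span killed_Inter_snd down_closed_lessThan J0 Jx_props(4)] .
  show least: "\<And>J. down_closed J \<Longrightarrow> y0 \<in> J \<Longrightarrow> killed Jx J a \<noteq> {0} \<Longrightarrow> Jy \<subseteq> J"
    unfolding Jy_def by (rule Inter_lower) simp
  show "Jy \<subseteq> {..<y1}" using least[OF down_closed_lessThan J0 Jx_props(4)] .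
  show "down_closed Jy" "y0 \<in> Jy" unfolding Jy_def by (auto intro: down_closed_Inter)
qed

lemma killed_below_Jx_trivial:
  assumes z: "z \<in> killed {..<s1} {..<y1} a" and s1: "s1 \<in> Jx"
  shows "z = 0"
proof (cases "x0 < s1")
  case True
  show ?thesis
  proof (rule ccontr)
    assume "z \<noteq> 0"
    then have "killed {..<s1} {..<y1} a \<noteq> {0}" using z by blast
    then have "Jx \<subseteq> {..<s1}" using Jx_props(5)[OF down_closed_lessThan] True by simp
    then show False using s1 by blast
  qed
next
  case False
  then show ?thesis using z F_id[OF aT] unfolding killed_def by auto
qed

lemma killed_below_Jy_trivial:
  assumes z: "z \<in> killed Jx {..<s2} a" and s2: "s2 \<in> Jy"
  shows "z = 0"
proof (cases "y0 < s2")
  case True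
  show ?thesis
  proof (rule ccontr)
    assume "z \<noteq> 0"
    then have "killed Jx {..<s2} a \<noteq> {0}" using z by blast
    then have "Jy \<subseteq> {..<s2}" using Jy_props(5)[OF down_closed_lessThan] True by simp
    then show False using s2 by blast
  qed
next
  case False
  then show ?thesis using z F_id[OF aT] unfolding killed_def by auto
qed

text \<open>A nonzero vector killed outside Jx \<times> Jy survives everywhere inside it: middle exactness
  would otherwise produce a nonzero vector at a killed outside a strictly smaller set.\<close>

lemma killed_survives:
  assumes e: "e \<in> killed Jx Jy a" "e \<noteq> 0" and s: "s1 \<in> Jx" "s2 \<in> Jy" "x0 \<le> s1" "y0 \<le> s2"
  shows "F a (s1, s2) e \<noteq> 0"
proof
  assume Fe: "F a (s1, s2) e = 0"
  have eV: "e \<in> V a" using e(1) killed_subset_V by blast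
  have T1: "(x0, s2) \<in> Tset" "(s1, y0) \<in> Tset" using Tset_up[OF aT] s by (auto simp: pleq_def)
  define u where "u = F a (x0, s2) e"
  have uV: "u \<in> V (x0, s2)" unfolding u_def using F_in_V[OF aT _ eV] s by (simp add: pleq_def)
  have "F (x0, s2) (s1, s2) u = F (s1, y0) (s1, s2) 0"
    using F_comp[OF aT pleq_PairI[of x0 x0 y0 s2] pleq_PairI[of x0 s1 s2 s2] eV] Fe
      F_zero[OF T1(2) pleq_PairI[of s1 s1 y0 s2]] s
    unfolding u_def by simp
  then obtain z where z: "z \<in> V a" "F a (x0, s2) z = u" "F a (s1, y0) z = 0"
    using middle_exact_lift[of x0 s1 y0 s2 u 0] s aT uV vs.subspace_0[OF V_subspace[OF T1(2)]]
      by auto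
  have "z \<in> killed {..<s1} {..<y1} a"
  proof -
    have "F a (p, y0) z = 0" if "s1 \<le> p" for p
      using F_zero_after[OF aT pleq_PairI[of x0 s1 y0 y0] pleq_PairI[of s1 p y0 y0] z(1) z(3)] that s(3)
      by simp
    moreover have "F a (x0, q) z = 0" if "y0 \<le> q" "q \<notin> Jy" for q
    proof -
      have "s2 \<le> q" using that s(2) Jy_props(1) unfolding down_closed_def by (meson linear)
      then have "F a (x0, q) z = F a (x0, q) e"
        using F_comp[OF aT pleq_PairI[of x0 x0 y0 s2] pleq_PairI[of x0 x0 s2 q]] z eV s
          unfolding u_def
        by simp
      also have "\<dots> = 0" using e(1) that unfolding killed_def by simp
      finally show ?thesis .
    qed
    ultimately have "z \<in> killed {..<s1} Jy a" unfolding killed_def using z(1)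
      by (auto simp: not_less)
    then show ?thesis using killed_mono Jy_props(3) by blast
  qed
  then have "z = 0" using killed_below_Jx_trivial s(1) by blast
  then have "u = 0" using z(2) F_zero[OF aT pleq_PairI[of x0 x0 y0 s2]] s by simp
  then have "F a (x0, q) e = 0" if "s2 \<le> q" for q
    using F_zero_after[OF aT pleq_PairI[of x0 x0 y0 s2] pleq_PairI[of x0 x0 s2 q] eV] that s
    unfolding u_def by simp
  then have "e \<in> killed Jx {..<s2} a" using e(1) unfolding killed_def by (auto simp: not_less)
  then show False using killed_below_Jy_trivial s(2) e(2) by blast
qed

definition "Blk = {t \<in> Tset. fst t \<in> Jx \<and> snd t \<in> Jy}"
abbreviation "K t \<equiv> killed Jx Jy t"

lemma Blk_Tset: "t \<in> Blk \<Longrightarrow> t \<in> Tset" by (simp add: Blk_def)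

lemma Blk_bound: "t \<in> Blk \<Longrightarrow> fst t < x1 \<and> snd t < y1 \<and> 0 < fst t + snd t"
  using Jx_props(3) Jy_props(3) unfolding Blk_def Tset_def by auto

lemma Blk_down: "t \<in> Blk \<Longrightarrow> s \<in> Tset \<Longrightarrow> pleq s t \<Longrightarrow> s \<in> Blk"
  using Jx_props(1) Jy_props(1) unfolding Blk_def down_closed_def pleq_def by auto

lemma Blk_join: "s \<in> Blk \<Longrightarrow> t \<in> Blk \<Longrightarrow> join s t \<in> Blk"
proof -
  assume st: "s \<in> Blk" "t \<in> Blk"
  have "join s t \<in> Tset" using Tset_up[OF Blk_Tset[OF st(1)] join_ge(1)] .
  moreover have "fst (join s t) \<in> Jx" "snd (join s t) \<in> Jy"
    using st unfolding Blk_def join_def by (auto simp: max_def)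
  ultimately show ?thesis unfolding Blk_def by simp
qed

lemma a_in_Blk: "a \<in> Blk" using aT Jx_props(2) Jy_props(2) by (simp add: Blk_def)

lemma F_in_K:
  assumes s: "s \<in> Tset" and z: "z \<in> K s" and st: "pleq s t"
  shows "F s t z \<in> K t"
proof -
  have zV: "z \<in> V s" using z killed_subset_V by blast
  have "F t (p, snd t) (F s t z) = 0" if "fst t \<le> p" "p \<notin> Jx" for p
  proof -
    have "F s (p, snd s) z = 0" using z that st unfolding killed_def pleq_def by simp
    then have "F s (p, snd t) z = 0"
      using F_zero_after[OF s _ _ zV, of "(p, snd s)" "(p, snd t)"] that st
      by (simp add: pleq_def)
    then show ?thesis using F_comp[OF s st _ zV, of "(p, snd t)"] that by (simp add: pleq_def)
  qed
  moreover have "F t (fst t, q) (F s t z) = 0" if "snd t \<le> q" "q \<notin> Jy" for q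
  proof -
    have "F s (fst s, q) z = 0" using z that st unfolding killed_def pleq_def by simp
    then have "F s (fst t, q) z = 0"
      using F_zero_after[OF s _ _ zV, of "(fst s, q)" "(fst t, q)"] that st
      by (simp add: pleq_def)
    then show ?thesis using F_comp[OF s st _ zV, of "(fst t, q)"] that by (simp add: pleq_def)
  qed
  ultimately show ?thesis unfolding killed_def using F_in_V[OF s st zV] by simp
qed

lemma F_K_outside:
  assumes s: "s \<in> Tset" and z: "z \<in> K s" and st: "pleq s t" and t: "t \<notin> Blk"
  shows "F s t z = 0"
proof -
  have zV: "z \<in> V s" using z killed_subset_V by blast
  have "fst t \<notin> Jx \<or> snd t \<notin> Jy" using t Tset_up[OF s st] unfolding Blk_def by simp
  then show ?thesis
  proof
    assume "fst t \<notin> Jx"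
    then have "F s (fst t, snd s) z = 0" using z st unfolding killed_def pleq_def by simp
    then show ?thesis using F_zero_after[OF s _ _ zV, of "(fst t, snd s)" t] st
      by (simp add: pleq_def)
  next
    assume "snd t \<notin> Jy"
    then have "F s (fst s, snd t) z = 0" using z st unfolding killed_def pleq_def by simp
    then show ?thesis using F_zero_after[OF s _ _ zV, of "(fst s, snd t)" t] st
      by (simp add: pleq_def)
  qed
qed

lemma horizontal_exit:
  assumes q: "q \<in> Blk"
  shows "\<exists>p0. fst q \<le> p0 \<and> p0 \<notin> Jx \<and> (\<forall>z\<in>V q. F q (p0, snd q) z = 0 \<longrightarrow>
            (\<forall>p. fst q \<le> p \<longrightarrow> p \<notin> Jx \<longrightarrow> F q (p, snd q) z = 0))"
proof -
  let ?P = "{(p, snd q) | p. fst q \<le> p \<and> p \<notin> Jx}"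
  have "x1 \<notin> Jx" using Jx_props(3) by blast
  moreover have "fst q \<le> x1" using Blk_bound[OF q] by simp
  ultimately have ne: "?P \<noteq> {}" by blast
  have ge: "\<And>r. r \<in> ?P \<Longrightarrow> pleq q r" by (auto simp: pleq_def)
  have ch: "\<And>r r'. r \<in> ?P \<Longrightarrow> r' \<in> ?P \<Longrightarrow> pleq r r' \<or> pleq r' r" by (auto simp: pleq_def)
  obtain r0 where r0: "r0 \<in> ?P" "\<forall>z\<in>V q. F q r0 z = 0 \<longrightarrow> (\<forall>r\<in>?P. F q r z = 0)"
    using kernel_along_chain_stabilizes[OF Blk_Tset[OF q] ne ge ch] by (rule bexE)
  from r0(1) obtain p0 where p0: "r0 = (p0, snd q)" "fst q \<le> p0" "p0 \<notin> Jx" by blast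
  show ?thesis
  proof (intro exI[of _ p0] conjI ballI impI allI)
    show "fst q \<le> p0" "p0 \<notin> Jx" by fact+
    fix z p assume z: "z \<in> V q" "F q (p0, snd q) z = 0" and p: "fst q \<le> p" "p \<notin> Jx"
    have "(p, snd q) \<in> ?P" using p by blast
    then show "F q (p, snd q) z = 0" using r0(2) z p0(1) by blast
  qed
qed

lemma vertical_exit:
  assumes q: "q \<in> Blk"
  shows "\<exists>p0. snd q \<le> p0 \<and> p0 \<notin> Jy \<and> (\<forall>z\<in>V q. F q (fst q, p0) z = 0 \<longrightarrow>
            (\<forall>p. snd q \<le> p \<longrightarrow> p \<notin> Jy \<longrightarrow> F q (fst q, p) z = 0))"
proof -
  let ?P = "{(fst q, p) | p. snd q \<le> p \<and> p \<notin> Jy}"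
  have "y1 \<notin> Jy" using Jy_props(3) by blast
  moreover have "snd q \<le> y1" using Blk_bound[OF q] by simp
  ultimately have ne: "?P \<noteq> {}" by blast
  have ge: "\<And>r. r \<in> ?P \<Longrightarrow> pleq q r" by (auto simp: pleq_def)
  have ch: "\<And>r r'. r \<in> ?P \<Longrightarrow> r' \<in> ?P \<Longrightarrow> pleq r r' \<or> pleq r' r" by (auto simp: pleq_def)
  obtain r0 where r0: "r0 \<in> ?P" "\<forall>z\<in>V q. F q r0 z = 0 \<longrightarrow> (\<forall>r\<in>?P. F q r z = 0)"
    using kernel_along_chain_stabilizes[OF Blk_Tset[OF q] ne ge ch] by (rule bexE)
  from r0(1) obtain p0 where p0: "r0 = (fst q, p0)" "snd q \<le> p0" "p0 \<notin> Jy" by blast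
  show ?thesis
  proof (intro exI[of _ p0] conjI ballI impI allI)
    show "snd q \<le> p0" "p0 \<notin> Jy" by fact+
    fix z p assume z: "z \<in> V q" "F q (fst q, p0) z = 0" and p: "snd q \<le> p" "p \<notin> Jy"
    have "(fst q, p) \<in> ?P" using p by blast
    then show "F q (fst q, p) z = 0" using r0(2) z p0(1) by blast
  qed
qed

lemma killed_above_step:
  assumes q: "(qx, qy) \<in> Blk" and h: "0 < h" and n2: "(qx, qy + h) \<in> Blk" and z: "z \<in> V (qx, qy)"
    and zu: "F (qx, qy) (qx, qy + h) z = u" and u: "u \<in> K (qx, qy + h)"
    and p: "qy \<le> p" "p \<notin> Jy"
  shows "F (qx, qy) (qx, p) z = 0"
proof -
  have hJ: "qy + h \<in> Jy" using n2 unfolding Blk_def by simp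
  have "qy + h \<le> p"
  proof (rule ccontr)
    assume "\<not> qy + h \<le> p" then have "p \<le> qy + h" by simp
    then have "p \<in> Jy" using hJ Jy_props(1) unfolding down_closed_def by blast
    with p(2) show False by simp
  qed
  then have "F (qx, qy) (qx, p) z = F (qx, qy + h) (qx, p) u"
    using F_comp[OF Blk_Tset[OF q] pleq_PairI[of qx qx qy "qy+h"] pleq_PairI[of qx qx "qy+h" p] z] zu h by simp
  also have "\<dots> = 0" using u p \<open>qy + h \<le> p\<close> unfolding killed_def by simp
  finally show ?thesis .
qed

lemma killed_right_step:
  assumes q: "(qx, qy) \<in> Blk" and h: "0 < h" and n1: "(qx + h, qy) \<in> Blk" and z: "z \<in> V (qx, qy)"
    and zw: "F (qx, qy) (qx + h, qy) z = w" and w: "w \<in> K (qx + h, qy)"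
    and p: "qx \<le> p" "p \<notin> Jx"
  shows "F (qx, qy) (p, qy) z = 0"
proof -
  have hJ: "qx + h \<in> Jx" using n1 unfolding Blk_def by simp
  have "qx + h \<le> p"
  proof (rule ccontr)
    assume "\<not> qx + h \<le> p" then have "p \<le> qx + h" by simp
    then have "p \<in> Jx" using hJ Jx_props(1) unfolding down_closed_def by blast
    with p(2) show False by simp
  qed
  then have "F (qx, qy) (p, qy) z = F (qx + h, qy) (p, qy) w"
    using F_comp[OF Blk_Tset[OF q] pleq_PairI[of qx "qx+h" qy qy] pleq_PairI[of "qx+h" p qy qy] z] zw h by simp
  also have "\<dots> = 0" using w p \<open>qx + h \<le> p\<close> unfolding killed_def by simp
  finally show ?thesis .
qed

lemma lift_killed_both:
  assumes q: "(qx, qy) \<in> Blk" and h: "0 < h"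
    and n1: "(qx + h, qy) \<in> Blk" and w: "w \<in> K (qx + h, qy)"
    and n2: "(qx, qy + h) \<in> Blk" and u: "u \<in> K (qx, qy + h)"
    and agree: "(qx + h, qy + h) \<in> Blk \<Longrightarrow>
              F (qx + h, qy) (qx + h, qy + h) w = F (qx, qy + h) (qx + h, qy + h) u"
  shows "\<exists>z\<in>K (qx, qy). F (qx, qy) (qx + h, qy) z = w \<and> F (qx, qy) (qx, qy + h) z = u"
proof -
  have qT: "(qx, qy) \<in> Tset" using Blk_Tset[OF q] .
  have "F (qx, qy + h) (qx + h, qy + h) u = F (qx + h, qy) (qx + h, qy + h) w"
  proof (cases "(qx + h, qy + h) \<in> Blk")
    case False
    then show ?thesis using F_K_outside[OF Blk_Tset[OF n1] w] F_K_outside[OF Blk_Tset[OF n2] u] h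
      by (simp add: pleq_def)
  qed (use agree in simp)
  moreover have "u \<in> V (qx, qy + h)" "w \<in> V (qx + h, qy)" using u w killed_subset_V by blast+
  ultimately obtain z where z: "z \<in> V (qx, qy)" "F (qx, qy) (qx, qy + h) z = u" "F (qx, qy) (qx + h, qy) z = w"
    using middle_exact_lift[of qx "qx + h" qy "qy + h" u w] h qT by auto
  have "z \<in> K (qx, qy)" unfolding killed_def
    using z(1) killed_right_step[OF q h n1 z(1) z(3) w] killed_above_step[OF q h n2 z(1) z(2) u]
      by simp
  then show ?thesis using z by blast
qed

lemma lift_killed_above:
  assumes q: "(qx, qy) \<in> Blk" and h: "0 < h" and n2: "(qx, qy + h) \<in> Blk" and u: "u \<in> K (qx, qy + h)"
  shows "\<exists>z\<in>K (qx, qy). F (qx, qy) (qx, qy + h) z = u"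
proof -
  have qT: "(qx, qy) \<in> Tset" using Blk_Tset[OF q] .
  obtain p0 where p0: "qx \<le> p0" "p0 \<notin> Jx" "\<forall>z\<in>V (qx, qy). F (qx, qy) (p0, qy) z = 0 \<longrightarrow>
          (\<forall>p. qx \<le> p \<longrightarrow> p \<notin> Jx \<longrightarrow> F (qx, qy) (p, qy) z = 0)"
    using horizontal_exit[OF q] unfolding fst_conv snd_conv by blast
  have Tp: "(p0, qy) \<in> Tset" using Tset_up[OF qT] p0(1) by (auto simp: pleq_def)
  have "F (qx, qy + h) (p0, qy + h) u = F (p0, qy) (p0, qy + h) 0"
    using u p0(1,2) F_zero[OF Tp, of "(p0, qy + h)"] h unfolding killed_def by (simp add: pleq_def)
  moreover have "u \<in> V (qx, qy + h)" using u killed_subset_V by blast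
  ultimately obtain z where z: "z \<in> V (qx, qy)" "F (qx, qy) (qx, qy + h) z = u" "F (qx, qy) (p0, qy) z = 0"
    using middle_exact_lift[of qx p0 qy "qy + h" u 0] h qT p0(1) vs.subspace_0[OF V_subspace[OF Tp]]
      by auto
  have "z \<in> K (qx, qy)" unfolding killed_def
    using z p0(3) killed_above_step[OF q h n2 z(1) z(2) u] by simp
  then show ?thesis using z by blast
qed

lemma lift_killed_right:
  assumes q: "(qx, qy) \<in> Blk" and h: "0 < h" and n1: "(qx + h, qy) \<in> Blk" and w: "w \<in> K (qx + h, qy)"
  shows "\<exists>z\<in>K (qx, qy). F (qx, qy) (qx + h, qy) z = w"
proof -
  have qT: "(qx, qy) \<in> Tset" using Blk_Tset[OF q] .
  obtain p0 where p0: "qy \<le> p0" "p0 \<notin> Jy" "\<forall>z\<in>V (qx, qy). F (qx, qy) (qx, p0) z = 0 \<longrightarrow>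
          (\<forall>p. qy \<le> p \<longrightarrow> p \<notin> Jy \<longrightarrow> F (qx, qy) (qx, p) z = 0)"
    using vertical_exit[OF q] unfolding fst_conv snd_conv by blast
  have Tp: "(qx, p0) \<in> Tset" using Tset_up[OF qT] p0(1) by (auto simp: pleq_def)
  have "F (qx, p0) (qx + h, p0) 0 = F (qx + h, qy) (qx + h, p0) w"
    using w p0(1,2) F_zero[OF Tp, of "(qx + h, p0)"] h unfolding killed_def by (simp add: pleq_def)
  moreover have "w \<in> V (qx + h, qy)" using w killed_subset_V by blast
  ultimately obtain z where z: "z \<in> V (qx, qy)" "F (qx, qy) (qx, p0) z = 0" "F (qx, qy) (qx + h, qy) z = w"
    using middle_exact_lift[of qx "qx + h" qy p0 0 w] h qT p0(1) vs.subspace_0[OF V_subspace[OF Tp]]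
      by auto
  have "z \<in> K (qx, qy)" unfolding killed_def
    using z p0(3) killed_right_step[OF q h n1 z(1) z(3) w] by simp
  then show ?thesis using z by blast
qed

lemma lift_killed_square:
  assumes q: "(qx, qy) \<in> Blk" and h: "0 < h"
    and w: "(qx + h, qy) \<in> Blk \<Longrightarrow> w \<in> K (qx + h, qy)"
    and u: "(qx, qy + h) \<in> Blk \<Longrightarrow> u \<in> K (qx, qy + h)"
    and agree: "(qx + h, qy) \<in> Blk \<Longrightarrow> (qx, qy + h) \<in> Blk \<Longrightarrow> (qx + h, qy + h) \<in> Blk \<Longrightarrow>
              F (qx + h, qy) (qx + h, qy + h) w = F (qx, qy + h) (qx + h, qy + h) u"
  shows "\<exists>z\<in>K (qx, qy). ((qx + h, qy) \<in> Blk \<longrightarrow> F (qx, qy) (qx + h, qy) z = w) \<and>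
                           ((qx, qy + h) \<in> Blk \<longrightarrow> F (qx, qy) (qx, qy + h) z = u)"
proof (cases "(qx + h, qy) \<in> Blk"; cases "(qx, qy + h) \<in> Blk")
  assume "(qx + h, qy) \<in> Blk" "(qx, qy + h) \<in> Blk"
  then show ?thesis using lift_killed_both[OF q h _ w _ u agree] by blast
next
  assume "(qx + h, qy) \<notin> Blk" "(qx, qy + h) \<in> Blk"
  then show ?thesis using lift_killed_above[OF q h _ u] by blast
next
  assume "(qx + h, qy) \<in> Blk" "(qx, qy + h) \<notin> Blk"
  then show ?thesis using lift_killed_right[OF q h _ w] by blast
next
  assume "(qx + h, qy) \<notin> Blk" "(qx, qy + h) \<notin> Blk"
  then show ?thesis using vs.subspace_0[OF subspace_killed[OF Blk_Tset[OF q]]] by blast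
qed

section \<open>Compatible families of killed vectors\<close>

definition on_grid :: "real \<Rightarrow> real \<times> real \<Rightarrow> bool" where
  "on_grid h t \<longleftrightarrow> (\<exists>i j::int. t = (x0 + h * of_int i, y0 + h * of_int j))"

definition "grid h = {t \<in> Blk. on_grid h t}"

definition compatible :: "(real \<times> real) set \<Rightarrow> (real \<times> real \<Rightarrow> 'v) \<Rightarrow> bool" where
  "compatible X m \<longleftrightarrow> (\<forall>s\<in>X. m s \<in> K s) \<and> (\<forall>s\<in>X. \<forall>t\<in>X. pleq s t \<longrightarrow> F s t (m s) = m t)"

lemma int_between_floor_ceiling:
  fixes h c d :: real and i :: int
  assumes h: "0 < h" and lo: "c < h * of_int i" and hi: "h * of_int i < d"
  shows "i \<in> {\<lfloor>c / h\<rfloor>..\<lceil>d / h\<rceil>}"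
proof -
  have "c / h < of_int i" using lo h by (simp add: pos_divide_less_eq mult.commute)
  then have "\<lfloor>c / h\<rfloor> \<le> i" by (simp add: floor_le_iff)
  moreover have "of_int i < d / h" using hi h by (simp add: pos_less_divide_eq mult.commute)
  then have "i \<le> \<lceil>d / h\<rceil>" by (simp add: le_ceiling_iff)
  ultimately show ?thesis by simp
qed

lemma finite_grid:
  assumes h: "0 < h"
  shows "finite (grid h)"
proof -
  let ?I = "{\<lfloor>(- y1 - x0) / h\<rfloor>..\<lceil>(x1 - x0) / h\<rceil>}"
  let ?J = "{\<lfloor>(- x1 - y0) / h\<rfloor>..\<lceil>(y1 - y0) / h\<rceil>}"
  have "grid h \<subseteq> (\<lambda>(i, j). (x0 + h * of_int i, y0 + h * of_int j)) ` (?I \<times> ?J)"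
  proof
    fix t assume t: "t \<in> grid h"
    then obtain i j :: int where ij: "t = (x0 + h * of_int i, y0 + h * of_int j)"
      unfolding grid_def on_grid_def by blast
    have b: "fst t < x1" "snd t < y1" "0 < fst t + snd t" using Blk_bound t unfolding grid_def
      by auto
    have "i \<in> ?I" using int_between_floor_ceiling[OF h, of "- y1 - x0" i "x1 - x0"] b ij by simp
    moreover have "j \<in> ?J" using int_between_floor_ceiling[OF h, of "- x1 - y0" j "y1 - y0"] b ij
      by simp
    ultimately show "t \<in> (\<lambda>(i, j). (x0 + h * of_int i, y0 + h * of_int j)) ` (?I \<times> ?J)"
      using ij by force
  qed
  then show ?thesis by (rule finite_subset) simp
qed

lemma grid_step:
  assumes h: "0 < h" and q: "on_grid h q" and t: "on_grid h t" and qt: "pleq q t" and ne: "t \<noteq> q"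
  shows "fst q + h \<le> fst t \<or> snd q + h \<le> snd t"
proof -
  obtain i j :: int where tij: "t = (x0 + h * of_int i, y0 + h * of_int j)" using t
    unfolding on_grid_def by blast
  obtain i' j' :: int where qij: "q = (x0 + h * of_int i', y0 + h * of_int j')" using q
    unfolding on_grid_def by blast
  have "h * of_int i' \<le> h * of_int i" "h * of_int j' \<le> h * of_int j" using qt tij qij
    by (auto simp: pleq_def)
  then have le: "i' \<le> i" "j' \<le> j" using h by (simp_all add: mult_le_cancel_left_pos)
  have "i' + 1 \<le> i \<or> j' + 1 \<le> j" using ne le tij qij by auto
  then show ?thesis
  proof
    assume "i' + 1 \<le> i"
    then have "real_of_int i' + 1 \<le> of_int i" by linarith
    then have "h * (of_int i' + 1) \<le> h * of_int i" using h by (simp add: mult_le_cancel_left_pos)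
    then show ?thesis using tij qij by (simp add: algebra_simps)
  next
    assume "j' + 1 \<le> j"
    then have "real_of_int j' + 1 \<le> of_int j" by linarith
    then have "h * (of_int j' + 1) \<le> h * of_int j" using h by (simp add: mult_le_cancel_left_pos)
    then show ?thesis using tij qij by (simp add: algebra_simps)
  qed
qed

lemma on_grid_right: "on_grid h (qx, qy) \<Longrightarrow> on_grid h (qx + h, qy)"
proof -
  assume "on_grid h (qx, qy)"
  then obtain i j :: int where "(qx, qy) = (x0 + h * of_int i, y0 + h * of_int j)"
    unfolding on_grid_def by blast
  then have "(qx + h, qy) = (x0 + h * of_int (i + 1), y0 + h * of_int j)"
    by (simp add: algebra_simps)
  then show ?thesis unfolding on_grid_def by blast
qed

lemma on_grid_up: "on_grid h (qx, qy) \<Longrightarrow> on_grid h (qx, qy + h)"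
proof -
  assume "on_grid h (qx, qy)"
  then obtain i j :: int where "(qx, qy) = (x0 + h * of_int i, y0 + h * of_int j)"
    unfolding on_grid_def by blast
  then have "(qx, qy + h) = (x0 + h * of_int i, y0 + h * of_int (j + 1))"
    by (simp add: algebra_simps)
  then show ?thesis unfolding on_grid_def by blast
qed

definition up_closed_in :: "(real \<times> real) set \<Rightarrow> (real \<times> real) set \<Rightarrow> bool" where
  "up_closed_in X U \<longleftrightarrow> (\<forall>u\<in>U. \<forall>t\<in>X. pleq u t \<longrightarrow> t \<in> U)"

lemma compatible_insert:
  assumes m: "compatible U m" and qU: "q \<notin> U" and q: "q \<in> Tset" and z: "z \<in> K q"
    and below: "\<And>s. s \<in> U \<Longrightarrow> \<not> pleq s q"
    and above: "\<And>t. t \<in> U \<Longrightarrow> pleq q t \<Longrightarrow> F q t z = m t"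
  shows "compatible (insert q U) (m(q := z))"
  unfolding compatible_def
proof (intro conjI ballI impI)
  fix s assume "s \<in> insert q U"
  then show "(m(q := z)) s \<in> K s" using m z qU unfolding compatible_def by auto
next
  fix s t assume s: "s \<in> insert q U" and t: "t \<in> insert q U" and st: "pleq s t"
  show "F s t ((m(q := z)) s) = (m(q := z)) t"
  proof (cases "s = q"; cases "t = q")
    assume "s = q" "t = q"
    moreover have "z \<in> V q" using z killed_subset_V by blast
    ultimately show ?thesis using F_id[OF q] by simp
  next
    assume "s = q" "t \<noteq> q"
    then show ?thesis using above t st by auto
  next
    assume "s \<noteq> q" "t = q"
    then show ?thesis using below s st by auto
  next
    assume "s \<noteq> q" "t \<noteq> q"
    then show ?thesis using m s t st unfolding compatible_def by auto
  qed
qed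

lemma grid_point_lift:
  assumes h: "0 < h" and m: "compatible U m" and U: "U \<subseteq> grid h"
    and q: "q \<in> grid h" "q \<notin> U" and above_in_U: "\<And>t. t \<in> grid h \<Longrightarrow> pleq q t \<Longrightarrow> t \<noteq> q \<Longrightarrow> t \<in> U"
  shows "\<exists>z\<in>K q. \<forall>t\<in>U. pleq q t \<longrightarrow> F q t z = m t"
proof -
  obtain qx qy where qq: "q = (qx, qy)" by (cases q)
  have qB: "(qx, qy) \<in> Blk" and qg: "on_grid h (qx, qy)" using q qq unfolding grid_def by auto
  have qT: "q \<in> Tset" using qB qq Blk_Tset by simp
  have mK: "\<And>s. s \<in> U \<Longrightarrow> m s \<in> K s"
    and mc: "\<And>s t. s \<in> U \<Longrightarrow> t \<in> U \<Longrightarrow> pleq s t \<Longrightarrow> F s t (m s) = m t"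
    using m unfolding compatible_def by auto
  have n1U: "(qx + h, qy) \<in> U" if "(qx + h, qy) \<in> Blk"
    using above_in_U[of "(qx + h, qy)"] that on_grid_right[OF qg] h qq
      by (simp add: grid_def pleq_def)
  have n2U: "(qx, qy + h) \<in> U" if "(qx, qy + h) \<in> Blk"
    using above_in_U[of "(qx, qy + h)"] that on_grid_up[OF qg] h qq by (simp add: grid_def pleq_def)
  have dU: "(qx + h, qy + h) \<in> U" if "(qx + h, qy + h) \<in> Blk"
    using above_in_U[of "(qx + h, qy + h)"] that on_grid_up[OF on_grid_right[OF qg]] h qq
    by (simp add: grid_def pleq_def)
  have "F (qx + h, qy) (qx + h, qy + h) (m (qx + h, qy)) = F (qx, qy + h) (qx + h, qy + h) (m (qx, qy + h))"
    if "(qx + h, qy) \<in> Blk" "(qx, qy + h) \<in> Blk" "(qx + h, qy + h) \<in> Blk"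
    using mc[OF n1U[OF that(1)] dU[OF that(3)]] mc[OF n2U[OF that(2)] dU[OF that(3)]] h
    by (simp add: pleq_def)
  then obtain z where z: "z \<in> K q"
    "(qx + h, qy) \<in> Blk \<Longrightarrow> F q (qx + h, qy) z = m (qx + h, qy)"
    "(qx, qy + h) \<in> Blk \<Longrightarrow> F q (qx, qy + h) z = m (qx, qy + h)"
    using lift_killed_square[OF qB h, of "m (qx + h, qy)" "m (qx, qy + h)"] mK n1U n2U qq by blast
  have zV: "z \<in> V q" using z(1) killed_subset_V by blast
  have via: "F q t z = m t" if "n \<in> Blk" "n \<in> U" "pleq q n" "pleq n t" "t \<in> U" "F q n z = m n" for n t
    using F_comp[OF qT that(3,4) zV] mc[OF that(2,5,4)] that(6) by simp
  have "F q t z = m t" if t: "t \<in> U" "pleq q t" for t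
  proof -
    have tB: "t \<in> Blk" "on_grid h t" using t(1) U unfolding grid_def by auto
    from grid_step[OF h qg tB(2)] t q(2) qq
    have "qx + h \<le> fst t \<or> qy + h \<le> snd t" by auto
    then show ?thesis
    proof
      assume "qx + h \<le> fst t"
      then have le: "pleq (qx + h, qy) t" using t(2) qq by (simp add: pleq_def)
      then have "(qx + h, qy) \<in> Blk" using Blk_down[OF tB(1)] Tset_up[OF qT] h qq
        by (simp add: pleq_def)
      then show ?thesis using via[OF _ n1U _ le t(1) z(2)] h qq by (simp add: pleq_def)
    next
      assume "qy + h \<le> snd t"
      then have le: "pleq (qx, qy + h) t" using t(2) qq by (simp add: pleq_def)
      then have "(qx, qy + h) \<in> Blk" using Blk_down[OF tB(1)] Tset_up[OF qT] h qq
        by (simp add: pleq_def)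
      then show ?thesis using via[OF _ n2U _ le t(1) z(3)] h qq by (simp add: pleq_def)
    qed
  qed
  then show ?thesis using z(1) by blast
qed

text \<open>Compatible families on a finite grid are extended downwards one point at a time,
  always adding a point of maximal coordinate sum, so that all its grid neighbours above are
  already present.\<close>

lemma extend_compatible_step:
  assumes h: "0 < h" and U: "U \<subseteq> grid h" "up_closed_in (grid h) U" and m: "compatible U m"
    and q: "q \<in> grid h - U" and qmax: "\<forall>t\<in>grid h - U. fst t + snd t \<le> fst q + snd q"
  shows "\<exists>z. compatible (insert q U) (m(q := z)) \<and> up_closed_in (grid h) (insert q U)"
proof -
  have above_in_U: "t \<in> U" if "t \<in> grid h" "pleq q t" "t \<noteq> q" for t
  proof (rule ccontr)
    assume "t \<notin> U"
    then have "fst t + snd t \<le> fst q + snd q" using qmax that(1) by blast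
    then show False using pleq_sum_less[OF that(2,3)] by simp
  qed
  obtain z where z: "z \<in> K q" "\<forall>t\<in>U. pleq q t \<longrightarrow> F q t z = m t"
    using grid_point_lift[OF h m U(1)] q above_in_U by blast
  have "q \<in> Tset" using q Blk_Tset unfolding grid_def by blast
  moreover have "\<not> pleq s q" if "s \<in> U" for s
    using U(2) q that unfolding up_closed_in_def by blast
  ultimately have "compatible (insert q U) (m(q := z))"
    using compatible_insert[OF m _ _ z(1)] q z(2) by blast
  moreover have "up_closed_in (grid h) (insert q U)"
    using U(2) above_in_U unfolding up_closed_in_def by blast
  ultimately show ?thesis by blast
qed

lemma extend_compatible_to_grid:
  assumes h: "0 < h"
  shows "U \<subseteq> grid h \<Longrightarrow> up_closed_in (grid h) U \<Longrightarrow> compatible U m \<Longrightarrow> \<exists>m'. compatible (grid h) m' \<and> (\<forall>u\<in>U. m' u = m u)"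
proof (induction "card (grid h - U)" arbitrary: U m rule: less_induct)
  case less
  show ?case
  proof (cases "grid h - U = {}")
    case True
    then have "U = grid h" using less.prems(1) by blast
    then show ?thesis using less.prems(3) by blast
  next
    case False
    have fin: "finite (grid h - U)" using finite_grid[OF h] by simp
    obtain q where q: "q \<in> grid h - U" "\<forall>t\<in>grid h - U. fst t + snd t \<le> fst q + snd q"
    proof -
      let ?M = "Max ((\<lambda>t. fst t + snd t) ` (grid h - U))"
      have "?M \<in> (\<lambda>t. fst t + snd t) ` (grid h - U)" using fin False by simp
      then obtain q where "q \<in> grid h - U" "fst q + snd q = ?M" by force
      then show ?thesis using that fin by simp
    qed
    obtain z where z: "compatible (insert q U) (m(q := z))" "up_closed_in (grid h) (insert q U)"
      using extend_compatible_step[OF h less.prems(1,2,3) q] by blast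
    have sub: "insert q U \<subseteq> grid h" using less.prems(1) q(1) by blast
    have "grid h - insert q U = (grid h - U) - {q}" by blast
    then have lt: "card (grid h - insert q U) < card (grid h - U)"
      using card_Diff1_less[OF fin q(1)] by simp
    obtain m' where m': "compatible (grid h) m'" "\<forall>u\<in>insert q U. m' u = (m(q := z)) u"
      using less.hyps[OF lt sub z(2) z(1)] by blast
    have "\<forall>u\<in>U. m' u = m u" using m'(2) q(1) by auto
    then show ?thesis using m'(1) by blast
  qed
qed

lemma on_grid_join: "0 < h \<Longrightarrow> on_grid h s \<Longrightarrow> on_grid h t \<Longrightarrow> on_grid h (join s t)"
proof -
  assume h: "0 < h" and s: "on_grid h s" and t: "on_grid h t"
  obtain i j :: int where tij: "t = (x0 + h * of_int i, y0 + h * of_int j)" using t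
    unfolding on_grid_def by blast
  obtain i' j' :: int where sij: "s = (x0 + h * of_int i', y0 + h * of_int j')" using s
    unfolding on_grid_def by blast
  have "max (x0 + h * of_int i') (x0 + h * of_int i) = x0 + h * of_int (max i' i)"
    using h by (auto simp: max_def mult_le_cancel_left_pos)
  moreover have "max (y0 + h * of_int j') (y0 + h * of_int j) = y0 + h * of_int (max j' j)"
    using h by (auto simp: max_def mult_le_cancel_left_pos)
  ultimately have "join s t = (x0 + h * of_int (max i' i), y0 + h * of_int (max j' j))"
    using sij tij by (simp add: join_def)
  then show ?thesis unfolding on_grid_def by blast
qed

lemma grid_join: "0 < h \<Longrightarrow> s \<in> grid h \<Longrightarrow> t \<in> grid h \<Longrightarrow> join s t \<in> grid h"
  using on_grid_join Blk_join unfolding grid_def by blast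

lemma compatible_subset: "compatible X m \<Longrightarrow> Y \<subseteq> X \<Longrightarrow> compatible Y m"
  unfolding compatible_def by blast

lemma compatible_push_eq:
  assumes P: "P \<subseteq> Blk" and jc: "\<And>s s'. s \<in> P \<Longrightarrow> s' \<in> P \<Longrightarrow> join s s' \<in> P"
    and m: "compatible P m" and p: "p \<in> P" "pleq p t" and p': "p' \<in> P" "pleq p' t"
  shows "F p t (m p) = F p' t (m p')"
proof -
  have push_to_join: "F r t (m r) = F (join r r') t (m (join r r'))"
    if "r \<in> P" "r' \<in> P" "pleq r t" "pleq r' t" for r r'
  proof -
    have "r \<in> Tset" using that(1) P Blk_Tset by blast
    moreover have "m r \<in> V r" using that(1) m killed_subset_V unfolding compatible_def by blast
    ultimately have "F r t (m r) = F (join r r') t (F r (join r r') (m r))"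
      using F_comp join_ge(1) join_le[OF that(3,4)] by blast
    also have "F r (join r r') (m r) = m (join r r')"
      using m jc[OF that(1,2)] that(1) join_ge(1) unfolding compatible_def by blast
    finally show ?thesis .
  qed
  have "join p p' = join p' p" by (simp add: join_def max.commute)
  then show ?thesis
    using push_to_join[OF p(1) p'(1) p(2) p'(2)] push_to_join[OF p'(1) p(1) p'(2) p(2)] by simp
qed

lemma compatible_extend_upwards:
  assumes P: "P \<subseteq> Blk" and jc: "\<And>s s'. s \<in> P \<Longrightarrow> s' \<in> P \<Longrightarrow> join s s' \<in> P"
    and m: "compatible P m"
  shows "\<exists>mu. compatible {t \<in> Blk. \<exists>p\<in>P. pleq p t} mu \<and> (\<forall>p\<in>P. mu p = m p)"
proof -
  let ?U = "{t \<in> Blk. \<exists>p\<in>P. pleq p t}"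
  define base where "base t = (SOME p. p \<in> P \<and> pleq p t)" for t
  define mu where "mu t = F (base t) t (m (base t))" for t
  have base: "base t \<in> P" "pleq (base t) t" if "t \<in> ?U" for t
    using someI_ex[of "\<lambda>p. p \<in> P \<and> pleq p t"] that unfolding base_def by auto
  have PT: "p \<in> Tset" "m p \<in> K p" "m p \<in> V p" if "p \<in> P" for p
  proof -
    show "p \<in> Tset" using that P Blk_Tset by blast
    show mK: "m p \<in> K p" using that m unfolding compatible_def by blast
    show "m p \<in> V p" using mK killed_subset_V by blast
  qed
  have mu: "mu t = F p t (m p)" if "t \<in> ?U" "p \<in> P" "pleq p t" for t p
    unfolding mu_def using compatible_push_eq[OF P jc m base[OF that(1)] that(2,3)] .
  have "compatible ?U mu" unfolding compatible_def
  proof (intro conjI ballI impI)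
    fix s assume "s \<in> ?U"
    then show "mu s \<in> K s" unfolding mu_def using F_in_K[OF PT(1,2)[OF base(1)] base(2)] by blast
  next
    fix s t assume s: "s \<in> ?U" and t: "t \<in> ?U" and st: "pleq s t"
    have "mu t = F (base s) t (m (base s))"
      using mu[OF t base(1)[OF s] pleq_trans[OF base(2)[OF s] st]] .
    also have "\<dots> = F s t (mu s)"
      unfolding mu_def
        using F_comp[OF PT(1)[OF base(1)[OF s]] base(2)[OF s] st PT(3)[OF base(1)[OF s]]] .
    finally show "F s t (mu s) = mu t" by simp
  qed
  moreover have "mu p = m p" if p: "p \<in> P" for p
  proof -
    have "p \<in> ?U" using p P pleq_refl by blast
    then show ?thesis using mu[OF _ p pleq_refl] F_id PT[OF p] by simp
  qed
  ultimately show ?thesis by blast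
qed

lemma extend_compatible_from_join_closed:
  assumes h: "0 < h" and P: "P \<subseteq> grid h" and jc: "\<And>s s'. s \<in> P \<Longrightarrow> s' \<in> P \<Longrightarrow> join s s' \<in> P"
    and m: "compatible P m"
  shows "\<exists>m'. compatible (grid h) m' \<and> (\<forall>p\<in>P. m' p = m p)"
proof -
  let ?U = "{t \<in> grid h. \<exists>p\<in>P. pleq p t}"
  have PB: "P \<subseteq> Blk" using P unfolding grid_def by blast
  obtain mu where mu: "compatible {t \<in> Blk. \<exists>p\<in>P. pleq p t} mu" "\<forall>p\<in>P. mu p = m p"
    using compatible_extend_upwards[OF PB jc m] by blast
  have "?U \<subseteq> {t \<in> Blk. \<exists>p\<in>P. pleq p t}" unfolding grid_def by auto
  then have "compatible ?U mu" by (rule compatible_subset[OF mu(1)])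
  moreover have "up_closed_in (grid h) ?U"
    unfolding up_closed_in_def by (auto intro: pleq_trans)
  ultimately obtain m' where m': "compatible (grid h) m'" "\<forall>u\<in>?U. m' u = mu u"
    using extend_compatible_to_grid[OF h, of ?U mu] by blast
  have "\<forall>p\<in>P. m' p = m p"
  proof
    fix p assume "p \<in> P"
    then have "p \<in> ?U" using P pleq_refl by blast
    then show "m' p = m p" using bspec[OF m'(2)] mu(2) \<open>p \<in> P\<close> by simp
  qed
  then show ?thesis using m'(1) by blast
qed

definition mesh :: "nat \<Rightarrow> real" where "mesh n = 1 / 2 ^ n"

lemma mesh_pos: "0 < mesh n" by (simp add: mesh_def)

lemma grid_Suc: "grid (mesh n) \<subseteq> grid (mesh (Suc n))"
proof
  fix t assume t: "t \<in> grid (mesh n)"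
  then obtain i j :: int where ij: "t = (x0 + mesh n * of_int i, y0 + mesh n * of_int j)"
    unfolding grid_def on_grid_def by blast
  have "mesh n = mesh (Suc n) * 2" by (simp add: mesh_def)
  then have "t = (x0 + mesh (Suc n) * of_int (2 * i), y0 + mesh (Suc n) * of_int (2 * j))"
    using ij by simp
  then show "t \<in> grid (mesh (Suc n))" using t unfolding grid_def on_grid_def by blast
qed

lemma grid_mono: "n \<le> N \<Longrightarrow> grid (mesh n) \<subseteq> grid (mesh N)"
proof (induction N)
  case 0 then show ?case by simp
next
  case (Suc N)
  then show ?case using grid_Suc[of N] by (cases "n = Suc N") auto
qed

definition "e0 = (SOME e. e \<in> K a \<and> e \<noteq> 0)"

lemma e0: "e0 \<in> K a" "e0 \<noteq> 0"
proof -
  have "\<exists>e. e \<in> K a \<and> e \<noteq> 0" using Jy_props(4) subspace_killed[OF aT] vs.subspace_0 by blast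
  then have "e0 \<in> K a \<and> e0 \<noteq> 0" unfolding e0_def by (rule someI_ex)
  then show "e0 \<in> K a" "e0 \<noteq> 0" by auto
qed

primrec grid_sec :: "nat \<Rightarrow> real \<times> real \<Rightarrow> 'v" where
  "grid_sec 0 = (SOME m. compatible (grid (mesh 0)) m \<and> m a = e0)"
| "grid_sec (Suc n) = (SOME m. compatible (grid (mesh (Suc n))) m \<and> (\<forall>t\<in>grid (mesh n). m t = grid_sec n t))"

lemma a_in_grid: "a \<in> grid h"
proof -
  have "a = (x0 + h * of_int (0::int), y0 + h * of_int (0::int))" by simp
  then show ?thesis using a_in_Blk unfolding grid_def on_grid_def by blast
qed

lemma grid_sec_Suc:
  assumes "compatible (grid (mesh n)) (grid_sec n)"
  shows "compatible (grid (mesh (Suc n))) (grid_sec (Suc n))"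
    and "\<forall>t\<in>grid (mesh n). grid_sec (Suc n) t = grid_sec n t"
proof -
  have "\<exists>m. compatible (grid (mesh (Suc n))) m \<and> (\<forall>t\<in>grid (mesh n). m t = grid_sec n t)"
    using extend_compatible_from_join_closed[OF mesh_pos grid_Suc grid_join[OF mesh_pos] assms] .
  then have "compatible (grid (mesh (Suc n))) (grid_sec (Suc n)) \<and>
      (\<forall>t\<in>grid (mesh n). grid_sec (Suc n) t = grid_sec n t)"
    unfolding grid_sec.simps by (rule someI_ex)
  then show "compatible (grid (mesh (Suc n))) (grid_sec (Suc n))"
    "\<forall>t\<in>grid (mesh n). grid_sec (Suc n) t = grid_sec n t" by auto
qed

lemma grid_sec_compatible: "compatible (grid (mesh n)) (grid_sec n) \<and> grid_sec n a = e0"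
proof (induction n)
  case 0
  have c: "compatible {a} (\<lambda>_. e0)" unfolding compatible_def using e0(1) F_id[OF aT]
    unfolding killed_def by auto
  have jc: "join s s' \<in> {a}" if "s \<in> {a}" "s' \<in> {a}" for s s' using that by (simp add: join_def)
  have "{a} \<subseteq> grid (mesh 0)" using a_in_grid by simp
  from extend_compatible_from_join_closed[OF mesh_pos this jc c]
  have "\<exists>m. compatible (grid (mesh 0)) m \<and> m a = e0" by simp
  then show ?case unfolding grid_sec.simps by (rule someI_ex)
next
  case (Suc n)
  then show ?case using grid_sec_Suc a_in_grid by simp
qed

lemma grid_sec_extends: "n \<le> N \<Longrightarrow> t \<in> grid (mesh n) \<Longrightarrow> grid_sec N t = grid_sec n t"
proof (induction N)
  case (Suc N)
  show ?case
  proof (cases "n = Suc N")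
    case False
    then have "n \<le> N" using Suc.prems by simp
    then have "grid_sec N t = grid_sec n t" "t \<in> grid (mesh N)"
      using Suc.IH Suc.prems(2) grid_mono by auto
    then show ?thesis using grid_sec_Suc(2) grid_sec_compatible by simp
  qed simp
qed simp

lemma grid_point_below:
  assumes t: "t \<in> Blk"
  shows "\<exists>n g. g \<in> grid (mesh n) \<and> pleq g t"
proof -
  have "0 < fst t + snd t" using Blk_bound[OF t] by simp
  then obtain n where n: "(1/2::real) ^ n < (fst t + snd t) / 2"
    using real_arch_pow_inv[of "(fst t + snd t) / 2" "1/2"] by auto
  define h where "h = mesh n"
  have h: "0 < h" "h < (fst t + snd t) / 2" using n mesh_pos unfolding h_def mesh_def
    by (auto simp: power_one_over)
  define g where "g = (x0 + h * of_int \<lfloor>(fst t - x0) / h\<rfloor>, y0 + h * of_int \<lfloor>(snd t - y0) / h\<rfloor>)"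
  have gt: "pleq g t" unfolding g_def pleq_def
    using floor_divide_bounds(1)[OF h(1), of "fst t - x0"] floor_divide_bounds(1)[OF h(1), of "snd t - y0"]
    by simp
  have "g \<in> Tset" unfolding g_def Tset_def
    using floor_divide_bounds(2)[OF h(1), of "fst t - x0"] floor_divide_bounds(2)[OF h(1), of "snd t - y0"] h(2)
    by simp
  then have "g \<in> Blk" using Blk_down[OF t _ gt] by simp
  moreover have "on_grid h g" unfolding g_def on_grid_def by blast
  ultimately have "g \<in> grid (mesh n)" unfolding grid_def h_def by simp
  then show ?thesis using gt by blast
qed

definition "sec t = (SOME z. \<exists>n g. g \<in> grid (mesh n) \<and> pleq g t \<and> z = F g t (grid_sec n g))"

lemma grid_Blk: "g \<in> grid h \<Longrightarrow> g \<in> Blk" unfolding grid_def by simp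

lemma grid_sec_in_V: "g \<in> grid (mesh n) \<Longrightarrow> grid_sec n g \<in> V g"
  using grid_sec_compatible[of n] unfolding compatible_def killed_def by blast

lemma grid_sec_push_eq:
  assumes g: "g \<in> grid (mesh n)" "pleq g t" and g': "g' \<in> grid (mesh n')" "pleq g' t"
  shows "F g t (grid_sec n g) = F g' t (grid_sec n' g')"
proof -
  define N where "N = max n n'"
  have gN: "g \<in> grid (mesh N)" "g' \<in> grid (mesh N)"
    using grid_mono[of n N] grid_mono[of n' N] g(1) g'(1) unfolding N_def by auto
  have "grid_sec N g = grid_sec n g" "grid_sec N g' = grid_sec n' g'"
    using grid_sec_extends g(1) g'(1) unfolding N_def by auto
  moreover have "grid (mesh N) \<subseteq> Blk" using grid_Blk by blast
  ultimately show ?thesis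
    using compatible_push_eq[OF _ grid_join[OF mesh_pos] conjunct1[OF grid_sec_compatible] gN(1) g(2) gN(2) g'(2)]
    by simp
qed

lemma sec_eq:
  assumes t: "t \<in> Blk" and g: "g \<in> grid (mesh n)" "pleq g t"
  shows "sec t = F g t (grid_sec n g)"
proof -
  have ex: "\<exists>z. \<exists>n g. g \<in> grid (mesh n) \<and> pleq g t \<and> z = F g t (grid_sec n g)" using g by blast
  have "\<exists>n g. g \<in> grid (mesh n) \<and> pleq g t \<and> sec t = F g t (grid_sec n g)"
    unfolding sec_def using someI_ex[OF ex] .
  then obtain n' g' where g': "g' \<in> grid (mesh n')" "pleq g' t" "sec t = F g' t (grid_sec n' g')"
    by blast
  show ?thesis using grid_sec_push_eq[OF g'(1,2) g] g'(3) by simp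
qed

lemma sec_a: "sec a = e0"
  using sec_eq[OF a_in_Blk a_in_grid[of "mesh 0"] pleq_refl] grid_sec_compatible[of 0] F_id[OF aT] e0(1) unfolding killed_def by simp

lemma sec_in_K:
  assumes t: "t \<in> Blk"
  shows "sec t \<in> K t"
proof -
  obtain n g where g: "g \<in> grid (mesh n)" "pleq g t" using grid_point_below[OF t] by blast
  have "grid_sec n g \<in> K g" using grid_sec_compatible[of n] g(1) unfolding compatible_def by blast
  then show ?thesis using sec_eq[OF t g] F_in_K[OF Blk_Tset[OF grid_Blk[OF g(1)]] _ g(2)] by simp
qed

lemma sec_compatible:
  assumes s: "s \<in> Blk" and t: "t \<in> Blk" and st: "pleq s t"
  shows "F s t (sec s) = sec t"
proof -
  obtain n g where g: "g \<in> grid (mesh n)" "pleq g s" using grid_point_below[OF s] by blast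
  have gt: "pleq g t" using pleq_trans[OF g(2) st] .
  have "F s t (sec s) = F s t (F g s (grid_sec n g))" using sec_eq[OF s g] by simp
  also have "\<dots> = F g t (grid_sec n g)"
    using F_comp[OF Blk_Tset[OF grid_Blk[OF g(1)]] g(2) st grid_sec_in_V[OF g(1)]] by simp
  also have "\<dots> = sec t" using sec_eq[OF t g(1) gt] by simp
  finally show ?thesis .
qed

lemma sec_in_V: "t \<in> Blk \<Longrightarrow> sec t \<in> V t" using sec_in_K unfolding killed_def by blast

lemma sec_outside:
  assumes s: "s \<in> Blk" and st: "pleq s t" and t: "t \<notin> Blk"
  shows "F s t (sec s) = 0"
  using F_K_outside[OF Blk_Tset[OF s] sec_in_K[OF s] st t] .

section \<open>Compatible functionals\<close>

definition "cof_x = (SOME \<alpha> :: nat \<Rightarrow> real. (\<forall>n. \<alpha> n \<in> Jx) \<and> \<alpha> 0 = x0 \<and> mono \<alpha> \<and> (\<forall>p\<in>Jx. \<exists>n. p \<le> \<alpha> n))"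
definition "cof_y = (SOME \<alpha> :: nat \<Rightarrow> real. (\<forall>n. \<alpha> n \<in> Jy) \<and> \<alpha> 0 = y0 \<and> mono \<alpha> \<and> (\<forall>p\<in>Jy. \<exists>n. p \<le> \<alpha> n))"

lemma cof_x: "(\<forall>n. cof_x n \<in> Jx) \<and> cof_x 0 = x0 \<and> mono cof_x \<and> (\<forall>p\<in>Jx. \<exists>n. p \<le> cof_x n)"
  unfolding cof_x_def using someI_ex[OF down_closed_cofinal_seq[OF Jx_props(1,2,3)]] .
lemma cof_y: "(\<forall>n. cof_y n \<in> Jy) \<and> cof_y 0 = y0 \<and> mono cof_y \<and> (\<forall>p\<in>Jy. \<exists>n. p \<le> cof_y n)"
  unfolding cof_y_def using someI_ex[OF down_closed_cofinal_seq[OF Jy_props(1,2,3)]] .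

definition "cof n = (cof_x n, cof_y n)"

lemma cof_0: "cof 0 = a" using cof_x cof_y unfolding cof_def by simp
lemma cof_mono: "n \<le> m \<Longrightarrow> pleq (cof n) (cof m)"
  using cof_x cof_y unfolding cof_def pleq_def mono_def by simp
lemma cof_Blk: "cof n \<in> Blk"
proof -
  have "pleq a (cof n)" using cof_mono[of 0 n] cof_0 by simp
  then have "cof n \<in> Tset" using Tset_up[OF aT] by blast
  then show ?thesis using cof_x cof_y unfolding Blk_def cof_def by simp
qed
lemma cof_Tset: "cof n \<in> Tset" using cof_Blk Blk_Tset by blast
lemma cofinal:
  assumes t: "t \<in> Blk"
  shows "\<exists>n. pleq t (cof n)"
proof -
  obtain n1 where n1: "fst t \<le> cof_x n1" using cof_x t unfolding Blk_def by blast
  obtain n2 where n2: "snd t \<le> cof_y n2" using cof_y t unfolding Blk_def by blast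
  have "cof_x n1 \<le> cof_x (max n1 n2)" "cof_y n2 \<le> cof_y (max n1 n2)" using cof_x cof_y
    unfolding mono_def by auto
  then have "pleq t (cof (max n1 n2))" using n1 n2 unfolding cof_def pleq_def by simp
  then show ?thesis by blast
qed

definition "ev_ker n = {x \<in> V (cof n). \<exists>m\<ge>n. F (cof n) (cof m) x = 0}"

lemma subspace_ev_ker: "vs.subspace (ev_ker n)"
proof (rule vs.subspaceI)
  show "0 \<in> ev_ker n" unfolding ev_ker_def
    using vs.subspace_0[OF V_subspace[OF cof_Tset]] F_zero[OF cof_Tset pleq_refl] by auto
next
  fix x y assume "x \<in> ev_ker n" "y \<in> ev_ker n"
  then obtain m1 m2 where m: "n \<le> m1" "F (cof n) (cof m1) x = 0" "n \<le> m2" "F (cof n) (cof m2) y = 0"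
    and xy: "x \<in> V (cof n)" "y \<in> V (cof n)" unfolding ev_ker_def by blast
  define M where "M = max m1 m2"
  have "F (cof n) (cof M) x = 0" "F (cof n) (cof M) y = 0"
    using F_zero_after[OF cof_Tset cof_mono cof_mono] m xy unfolding M_def by auto
  then have "F (cof n) (cof M) (x + y) = 0" using F_add[OF cof_Tset cof_mono xy] m(1)
    unfolding M_def by simp
  then show "x + y \<in> ev_ker n"
    unfolding ev_ker_def using vs.subspace_add[OF V_subspace[OF cof_Tset] xy] m(1) M_def
    by (intro CollectI conjI exI[of _ M]) auto
next
  fix c x assume "x \<in> ev_ker n"
  then obtain m where m: "n \<le> m" "F (cof n) (cof m) x = 0" and x: "x \<in> V (cof n)"
    unfolding ev_ker_def by blast
  then have "F (cof n) (cof m) (scale c x) = 0" using F_scale[OF cof_Tset cof_mono[OF m(1)] x]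
    by simp
  then show "scale c x \<in> ev_ker n"
    unfolding ev_ker_def using vs.subspace_scale[OF V_subspace[OF cof_Tset] x] m(1) by blast
qed

lemma ev_ker_pullback:
  assumes x: "x \<in> V (cof n)" and z: "F (cof n) (cof (Suc n)) x \<in> ev_ker (Suc n)"
  shows "x \<in> ev_ker n"
proof -
  obtain m where m: "m \<ge> Suc n" "F (cof (Suc n)) (cof m) (F (cof n) (cof (Suc n)) x) = 0" using z
    unfolding ev_ker_def by blast
  have "F (cof n) (cof m) x = 0"
    using F_comp[OF cof_Tset cof_mono[of n "Suc n"] cof_mono[OF m(1)] x] m(2) by simp
  moreover have "m \<ge> n" using m(1) by simp
  ultimately show ?thesis unfolding ev_ker_def using x by blast
qed

lemma e0_not_ev_ker: "e0 \<notin> ev_ker 0"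
proof
  assume "e0 \<in> ev_ker 0"
  then obtain m where m: "F a (cof m) e0 = 0" unfolding ev_ker_def cof_0 by blast
  have "F a (cof m) e0 \<noteq> 0"
    using killed_survives[OF e0, of "cof_x m" "cof_y m"] cof_x cof_y cof_mono[of 0 m] cof_0
      unfolding cof_def pleq_def by simp
  then show False using m by simp
qed

primrec chain_fun :: "nat \<Rightarrow> 'v \<Rightarrow> 'k" where
  "chain_fun 0 = (SOME g. Vector_Spaces.linear scale (*) g \<and> g e0 = 1 \<and> (\<forall>z\<in>ev_ker 0. g z = 0))"
| "chain_fun (Suc n) = (SOME g. Vector_Spaces.linear scale (*) g \<and> (\<forall>x\<in>V (cof n). g (F (cof n) (cof (Suc n)) x) = chain_fun n x)
      \<and> (\<forall>z\<in>ev_ker (Suc n). g z = 0))"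

lemma chain_fun_0:
  "Vector_Spaces.linear scale (*) (chain_fun 0) \<and> chain_fun 0 e0 = 1 \<and> (\<forall>z\<in>ev_ker 0. chain_fun 0 z = 0)"
  unfolding chain_fun.simps
  using someI_ex[OF vs.exists_functional_one_off_subspace[OF subspace_ev_ker e0_not_ev_ker]] .

lemma chain_fun_Suc:
  assumes "Vector_Spaces.linear scale (*) (chain_fun n)" "\<forall>z\<in>ev_ker n. chain_fun n z = 0"
  shows "Vector_Spaces.linear scale (*) (chain_fun (Suc n)) \<and>
    (\<forall>x\<in>V (cof n). chain_fun (Suc n) (F (cof n) (cof (Suc n)) x) = chain_fun n x) \<and>
    (\<forall>z\<in>ev_ker (Suc n). chain_fun (Suc n) z = 0)"
proof -
  have "chain_fun n x = 0" if "x \<in> V (cof n)" "F (cof n) (cof (Suc n)) x \<in> ev_ker (Suc n)" for x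
    using ev_ker_pullback[OF that] assms(2) by blast
  moreover have "pleq (cof n) (cof (Suc n))" using cof_mono by simp
  ultimately have "\<exists>g. Vector_Spaces.linear scale (*) g \<and>
      (\<forall>x\<in>V (cof n). g (F (cof n) (cof (Suc n)) x) = chain_fun n x) \<and> (\<forall>z\<in>ev_ker (Suc n). g z = 0)"
    using vs.exists_functional_through_map[OF V_subspace[OF cof_Tset] subspace_ev_ker F_lin_on[OF cof_Tset]
        assms(1)] by blast
  then
  show ?thesis unfolding chain_fun.simps by (rule someI_ex)
qed

lemma chain_fun_linear: "Vector_Spaces.linear scale (*) (chain_fun n) \<and> (\<forall>z\<in>ev_ker n. chain_fun n z = 0)"
  by (induction n) (use chain_fun_0 chain_fun_Suc in auto)

lemma chain_fun_step: "x \<in> V (cof n) \<Longrightarrow> chain_fun (Suc n) (F (cof n) (cof (Suc n)) x) = chain_fun n x"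
  using chain_fun_Suc chain_fun_linear by blast

lemma chain_fun_push: "n \<le> N \<Longrightarrow> x \<in> V (cof n) \<Longrightarrow> chain_fun N (F (cof n) (cof N) x) = chain_fun n x"
proof (induction N)
  case 0 then show ?case using F_id[OF cof_Tset] by simp
next
  case (Suc N)
  show ?case
  proof (cases "n = Suc N")
    case True then show ?thesis using F_id[OF cof_Tset Suc.prems(2)] by simp
  next
    case False
    then have nN: "n \<le> N" using Suc.prems by simp
    have "F (cof n) (cof (Suc N)) x = F (cof N) (cof (Suc N)) (F (cof n) (cof N) x)"
      using F_comp[OF cof_Tset cof_mono[OF nN] cof_mono[of N "Suc N"] Suc.prems(2)] by simp
    moreover have "F (cof n) (cof N) x \<in> V (cof N)"
      using F_in_V[OF cof_Tset cof_mono[OF nN] Suc.prems(2)] .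
    ultimately have "chain_fun (Suc N) (F (cof n) (cof (Suc N)) x) = chain_fun N (F (cof n) (cof N) x)"
      using chain_fun_step by simp
    then show ?thesis using Suc.IH[OF nN Suc.prems(2)] by simp
  qed
qed

definition "dual_sec t x = chain_fun (LEAST n. pleq t (cof n)) (F t (cof (LEAST n. pleq t (cof n))) x)"

lemma dual_sec_eq:
  assumes t: "t \<in> Blk" and n: "pleq t (cof n)" and x: "x \<in> V t"
  shows "dual_sec t x = chain_fun n (F t (cof n) x)"
proof -
  define n0 where "n0 = (LEAST n. pleq t (cof n))"
  have n0: "pleq t (cof n0)" "n0 \<le> n" unfolding n0_def
    using LeastI[of "\<lambda>n. pleq t (cof n)" n] Least_le[of "\<lambda>n. pleq t (cof n)" n] n by auto
  have "chain_fun n (F t (cof n) x) = chain_fun n (F (cof n0) (cof n) (F t (cof n0) x))"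
    using F_comp[OF Blk_Tset[OF t] n0(1) cof_mono[OF n0(2)] x] by simp
  also have "\<dots> = chain_fun n0 (F t (cof n0) x)"
    using chain_fun_push[OF n0(2) F_in_V[OF Blk_Tset[OF t] n0(1) x]] .
  finally show ?thesis unfolding dual_sec_def n0_def by simp
qed

lemma dual_sec_compatible:
  assumes s: "s \<in> Blk" and t: "t \<in> Blk" and st: "pleq s t" and x: "x \<in> V s"
  shows "dual_sec t (F s t x) = dual_sec s x"
proof -
  obtain n where n: "pleq t (cof n)" using cofinal[OF t] by blast
  have sn: "pleq s (cof n)" using pleq_trans[OF st n] .
  have "dual_sec t (F s t x) = chain_fun n (F t (cof n) (F s t x))"
    using dual_sec_eq[OF t n F_in_V[OF Blk_Tset[OF s] st x]] .
  also have "\<dots> = chain_fun n (F s (cof n) x)" using F_comp[OF Blk_Tset[OF s] st n x] by simp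
  also have "\<dots> = dual_sec s x" using dual_sec_eq[OF s sn x] by simp
  finally show ?thesis .
qed

lemma dual_sec_sec:
  assumes t: "t \<in> Blk"
  shows "dual_sec t (sec t) = 1"
proof -
  obtain n where n: "pleq t (cof n)" using cofinal[OF t] by blast
  have "dual_sec t (sec t) = chain_fun n (F t (cof n) (sec t))"
    using dual_sec_eq[OF t n sec_in_V[OF t]] .
  also have "F t (cof n) (sec t) = sec (cof n)" using sec_compatible[OF t cof_Blk n] .
  also have "sec (cof n) = F a (cof n) e0"
    using sec_compatible[OF a_in_Blk cof_Blk, of n] cof_mono[of 0 n] cof_0 sec_a by simp
  also have "chain_fun n (F a (cof n) e0) = chain_fun 0 e0"
    using chain_fun_push[of 0 n e0] cof_0 e0(1) unfolding killed_def by simp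
  finally show ?thesis using chain_fun_0 by simp
qed

lemma dual_sec_lin_on:
  assumes t: "t \<in> Blk"
  shows "lin_on scale (*) (V t) (dual_sec t)"
proof -
  obtain n where n: "pleq t (cof n)" using cofinal[OF t] by blast
  interpret g: Vector_Spaces.linear scale "(*)" "chain_fun n" using chain_fun_linear by blast
  show ?thesis unfolding lin_on_def
  proof (intro conjI ballI allI)
    fix x y assume x: "x \<in> V t" and y: "y \<in> V t"
    have "x + y \<in> V t" using vs.subspace_add[OF V_subspace[OF Blk_Tset[OF t]] x y] .
    then show "dual_sec t (x + y) = dual_sec t x + dual_sec t y"
      using dual_sec_eq[OF t n] x y F_add[OF Blk_Tset[OF t] n x y] g.add by simp
  next
    fix c x assume x: "x \<in> V t"
    have "scale c x \<in> V t" using vs.subspace_scale[OF V_subspace[OF Blk_Tset[OF t]] x] .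
    then show "dual_sec t (scale c x) = c * dual_sec t x"
      using dual_sec_eq[OF t n] x F_scale[OF Blk_Tset[OF t] n x] g.scale by simp
  qed
qed

lemma dual_sec_zero: "t \<in> Blk \<Longrightarrow> dual_sec t 0 = 0"
  using dual_sec_lin_on[of t] vs.subspace_0[OF V_subspace[OF Blk_Tset]] unfolding lin_on_def
  by (metis mult_zero_left vs.scale_zero_left)

lemma dual_sec_diff:
  assumes t: "t \<in> Blk" and x: "x \<in> V t" and y: "y \<in> V t"
  shows "dual_sec t (x - y) = dual_sec t x - dual_sec t y"
proof -
  have d: "x - y \<in> V t" using vs.subspace_diff[OF V_subspace[OF Blk_Tset[OF t]] x y] .
  have "dual_sec t x = dual_sec t ((x - y) + y)" by simp
  also have "\<dots> = dual_sec t (x - y) + dual_sec t y" using dual_sec_lin_on[OF t] d y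
    unfolding lin_on_def by blast
  finally show ?thesis by simp
qed

lemma dual_sec_scale: "t \<in> Blk \<Longrightarrow> x \<in> V t \<Longrightarrow> dual_sec t (scale c x) = c * dual_sec t x"
  using dual_sec_lin_on unfolding lin_on_def by blast

section \<open>Splitting off the block module\<close>

definition "sec_line t = (if t \<in> Blk then vs.span {sec t} else {0})"

definition "dual_ker t = (if t \<in> Blk then {z \<in> V t. dual_sec t z = 0} else V t)"

lemma span_sec_iff: "x \<in> vs.span {sec t} \<longleftrightarrow> (\<exists>c. x = scale c (sec t))"
  using vs.span_singleton[of "sec t"] by auto

lemma submod_sec_line: "submod Tset scale V F sec_line"
  unfolding submod_def
proof (intro conjI ballI impI)
  fix t assume t: "t \<in> Tset"
  show "vs.subspace (sec_line t)" unfolding sec_line_def by simp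
  show "sec_line t \<subseteq> V t" unfolding sec_line_def
    using vs.span_minimal[of "{sec t}" "V t"] sec_in_V V_subspace[OF t] vs.subspace_0[OF V_subspace[OF t]]
    by auto
next
  fix s t assume s: "s \<in> Tset" and st: "pleq s t"
  show "F s t ` sec_line s \<subseteq> sec_line t"
  proof
    fix y assume "y \<in> F s t ` sec_line s"
    then obtain x where x: "x \<in> sec_line s" "y = F s t x" by blast
    show "y \<in> sec_line t"
    proof (cases "s \<in> Blk")
      case True
      then obtain c where "x = scale c (sec s)" using x(1) span_sec_iff unfolding sec_line_def
        by auto
      then have y: "y = scale c (F s t (sec s))" using x(2) F_scale[OF s st sec_in_V[OF True]]
        by simp
      show ?thesis
      proof (cases "t \<in> Blk")
        case True
        then show ?thesis using y sec_compatible[OF \<open>s \<in> Blk\<close> True st] span_sec_iff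
          unfolding sec_line_def by auto
      next
        case False
        then show ?thesis using y sec_outside[OF \<open>s \<in> Blk\<close> st False] unfolding sec_line_def by simp
      qed
    next
      case False
      then show ?thesis using x F_zero[OF s st] unfolding sec_line_def by (simp add: vs.span_zero)
    qed
  qed
qed

lemma submod_dual_ker: "submod Tset scale V F dual_ker"
  unfolding submod_def
proof (intro conjI ballI impI)
  fix t assume t: "t \<in> Tset"
  show "vs.subspace (dual_ker t)"
  proof (cases "t \<in> Blk")
    case True
    show ?thesis unfolding dual_ker_def using True
    proof (simp, intro vs.subspaceI)
      show "0 \<in> {z \<in> V t. dual_sec t z = 0}"
        using vs.subspace_0[OF V_subspace[OF t]] dual_sec_zero[OF True] by simp
      show "x + y \<in> {z \<in> V t. dual_sec t z = 0}"
        if "x \<in> {z \<in> V t. dual_sec t z = 0}" "y \<in> {z \<in> V t. dual_sec t z = 0}" for x y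
        using that vs.subspace_add[OF V_subspace[OF t]] dual_sec_lin_on[OF True]
          unfolding lin_on_def by auto
      show "scale c x \<in> {z \<in> V t. dual_sec t z = 0}" if "x \<in> {z \<in> V t. dual_sec t z = 0}" for c x
        using that vs.subspace_scale[OF V_subspace[OF t]] dual_sec_scale[OF True] by auto
    qed
  qed (simp add: dual_ker_def V_subspace[OF t])
  show "dual_ker t \<subseteq> V t" unfolding dual_ker_def by auto
next
  fix s t assume s: "s \<in> Tset" and st: "pleq s t"
  show "F s t ` dual_ker s \<subseteq> dual_ker t"
  proof
    fix y assume "y \<in> F s t ` dual_ker s"
    then obtain x where x: "x \<in> dual_ker s" "y = F s t x" by blast
    have xV: "x \<in> V s" using x(1) unfolding dual_ker_def by (auto split: if_splits)
    show "y \<in> dual_ker t"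
    proof (cases "t \<in> Blk")
      case True
      have sB: "s \<in> Blk" using Blk_down[OF True s st] .
      then have "dual_sec s x = 0" using x(1) unfolding dual_ker_def by simp
      then show ?thesis using True x(2) dual_sec_compatible[OF sB True st xV] F_in_V[OF s st xV]
        unfolding dual_ker_def by simp
    qed (use x(2) F_in_V[OF s st xV] in \<open>simp add: dual_ker_def\<close>)
  qed
qed

lemma sec_line_Int_dual_ker:
  assumes t: "t \<in> Tset"
  shows "sec_line t \<inter> dual_ker t = {0}"
proof (cases "t \<in> Blk")
  case True
  have "x = 0" if "x \<in> sec_line t" "x \<in> dual_ker t" for x
  proof -
    have "x \<in> vs.span {sec t}" using that(1) True unfolding sec_line_def by simp
    then obtain c where c: "x = scale c (sec t)" using span_sec_iff by blast
    have "dual_sec t x = 0" using that(2) True unfolding dual_ker_def by simp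
    then have "c = 0" using c dual_sec_scale[OF True sec_in_V[OF True]] dual_sec_sec[OF True] by simp
    then show ?thesis using c by simp
  qed
  moreover have "0 \<in> sec_line t" "0 \<in> dual_ker t"
    using True vs.subspace_0[OF V_subspace[OF t]] dual_sec_zero[OF True]
    unfolding sec_line_def dual_ker_def by (simp_all add: vs.span_zero)
  ultimately show ?thesis by blast
qed (use vs.subspace_0[OF V_subspace[OF t]] in \<open>auto simp: sec_line_def dual_ker_def\<close>)

lemma sec_line_plus_dual_ker:
  assumes t: "t \<in> Tset"
  shows "{u + w | u w. u \<in> sec_line t \<and> w \<in> dual_ker t} = V t"
proof (cases "t \<in> Blk")
  case True
  have sV: "scale c (sec t) \<in> V t" for c
    using vs.subspace_scale[OF V_subspace[OF t] sec_in_V[OF True]] .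
  have "y \<in> V t" if "u \<in> sec_line t" "w \<in> dual_ker t" "y = u + w" for y u w
    using that True sV span_sec_iff vs.subspace_add[OF V_subspace[OF t]]
    unfolding sec_line_def dual_ker_def by auto
  moreover have "z \<in> {u + w | u w. u \<in> sec_line t \<and> w \<in> dual_ker t}" if z: "z \<in> V t" for z
  proof -
    define u where "u = scale (dual_sec t z) (sec t)"
    have "u \<in> sec_line t" unfolding sec_line_def u_def using True span_sec_iff by auto
    moreover have "dual_sec t (z - u) = 0"
      using dual_sec_diff[OF True z sV] dual_sec_scale[OF True sec_in_V[OF True]] dual_sec_sec[OF True]
      unfolding u_def by simp
    then have "z - u \<in> dual_ker t"
      unfolding dual_ker_def using True vs.subspace_diff[OF V_subspace[OF t] z sV] u_def by simp
    ultimately show ?thesis by force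
  qed
  ultimately show ?thesis by blast
qed (use vs.subspace_0[OF V_subspace[OF t]] in \<open>force simp: sec_line_def dual_ker_def\<close>)

lemma dual_ker_trivial:
  assumes ind: "indecomposable scale Tset V F"
  shows "\<forall>t\<in>Tset. dual_ker t = {0}"
proof -
  have "sec a \<in> sec_line a"
    unfolding sec_line_def using a_in_Blk vs.span_base[of "sec a" "{sec a}"] by simp
  then have "sec_line a \<noteq> {0}" using sec_a e0(2) by auto
  then show ?thesis
    using ind submod_sec_line submod_dual_ker sec_line_Int_dual_ker sec_line_plus_dual_ker aT
    unfolding indecomposable_def by blast
qed

lemma bij_dual_sec:
  assumes t: "t \<in> Blk" and ker: "dual_ker t = {0}"
  shows "bij_betw (dual_sec t) (V t) UNIV"
proof -
  have tT: "t \<in> Tset" using Blk_Tset[OF t] .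
  have "inj_on (dual_sec t) (V t)"
  proof (rule inj_onI)
    fix x y assume x: "x \<in> V t" and y: "y \<in> V t" and e: "dual_sec t x = dual_sec t y"
    then have "x - y \<in> dual_ker t"
      using dual_sec_diff[OF t x y] vs.subspace_diff[OF V_subspace[OF tT] x y] t
      unfolding dual_ker_def by simp
    then show "x = y" using ker by simp
  qed
  moreover have "c \<in> dual_sec t ` V t" for c
  proof (rule image_eqI)
    show "scale c (sec t) \<in> V t" using vs.subspace_scale[OF V_subspace[OF tT] sec_in_V[OF t]] .
    show "c = dual_sec t (scale c (sec t))"
      using dual_sec_scale[OF t sec_in_V[OF t]] dual_sec_sec[OF t] by simp
  qed
  ultimately show ?thesis unfolding bij_betw_def by auto
qed

lemma pmod_iso_kB_Blk:
  assumes ker: "\<forall>t\<in>Tset. dual_ker t = {0}"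
  shows "pmod_iso Tset scale V F ((\<lambda>a b. a * b) :: 'k \<Rightarrow> 'k \<Rightarrow> 'k) (kB_space Blk) (kB_map Blk)"
proof -
  have V_outside: "V t = {0}" if "t \<in> Tset" "t \<notin> Blk" for t
    using bspec[OF ker that(1)] that(2) unfolding dual_ker_def by simp
  define \<phi> where "\<phi> t z = (if t \<in> Blk then dual_sec t z else (0::'k))" for t z
  show ?thesis
    unfolding pmod_iso_def
  proof (intro exI[of _ \<phi>] conjI ballI impI)
    fix t assume t: "t \<in> Tset"
    show "lin_on scale (\<lambda>a b. a * b) (V t) (\<phi> t)"
      using dual_sec_lin_on unfolding \<phi>_def lin_on_def by auto
    show "bij_betw (\<phi> t) (V t) (kB_space Blk t)"
    proof (cases "t \<in> Blk")
      case True
      then show ?thesis using bij_dual_sec[OF True bspec[OF ker t]] unfolding \<phi>_def kB_space_def by simp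
    next
      case False
      then show ?thesis using V_outside[OF t False] unfolding bij_betw_def kB_space_def \<phi>_def by simp
    qed
  next
    fix s t x assume s: "s \<in> Tset" and st: "pleq s t" and x: "x \<in> V s"
    show "\<phi> t (F s t x) = kB_map Blk s t (\<phi> s x)"
    proof (cases "s \<in> Blk"; cases "t \<in> Blk")
      assume "s \<in> Blk" "t \<in> Blk"
      then show ?thesis using dual_sec_compatible[OF _ _ st x] unfolding \<phi>_def kB_map_def by simp
    next
      assume "s \<notin> Blk"
      then have "x = 0" using V_outside[OF s] x by simp
      then show ?thesis using F_zero[OF s st] dual_sec_zero unfolding \<phi>_def kB_map_def by simp
    qed (simp_all add: \<phi>_def kB_map_def)
  qed
qed

lemma decomposition_block:
  assumes "indecomposable scale Tset V F"
  shows "\<exists>J. block_db J \<and> pmod_iso Tset scale V F ((\<lambda>a b. a * b) :: 'k \<Rightarrow> 'k \<Rightarrow> 'k)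
             (kB_space (J \<inter> Tset)) (kB_map (J \<inter> Tset))"
proof (intro exI conjI)
  show "block_db (Jx \<times> Jy)" unfolding block_db_def using Jx_props(1,2) Jy_props(1,2) by blast
  have "Jx \<times> Jy \<inter> Tset = Blk" unfolding Blk_def by auto
  then show "pmod_iso Tset scale V F (\<lambda>a b. a * b) (kB_space (Jx \<times> Jy \<inter> Tset)) (kB_map (Jx \<times> Jy \<inter> Tset))"
    using pmod_iso_kB_Blk[OF dual_ker_trivial[OF assms]] by simp
qed

end

theorem lemma5p11:
  fixes scale :: "'k::field \<Rightarrow> 'v::ab_group_add \<Rightarrow> 'v"
    and V :: "real \<times> real \<Rightarrow> 'v set"
    and F :: "real \<times> real \<Rightarrow> real \<times> real \<Rightarrow> 'v \<Rightarrow> 'v"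
  assumes "pmod scale Tset V F"
    and "pfd scale Tset V"
    and "middle_exact Tset V F"
    and "indecomposable scale Tset V F"
    and "x \<le> x'" and "y \<le> y'"
    and "(x, y) \<in> Tset" and "(x, y') \<in> Tset" and "(x', y) \<in> Tset" and "(x', y') \<in> Tset"
    and "\<exists>v\<in>V (x, y). v \<noteq> 0 \<and> F (x, y) (x, y') v = 0 \<and> F (x, y) (x', y) v = 0"
  shows "\<exists>J. block_db J \<and>
           pmod_iso Tset scale V F ((\<lambda>a b. a * b) :: 'k \<Rightarrow> 'k \<Rightarrow> 'k)
             (kB_space (J \<inter> Tset)) (kB_map (J \<inter> Tset))"
proof -
  obtain v where v: "v \<in> V (x, y)" "v \<noteq> 0" "F (x, y) (x, y') v = 0" "F (x, y) (x', y) v = 0"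
    using assms(11) by blast
  interpret kv: killed_vector scale V F x y x' y' v
    by (unfold_locales) (use assms v in auto)
  show ?thesis using kv.decomposition_block[OF assms(4)] .
qed

end
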